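(* Let $p$ be a prime. For an operator $A\in\mathcal{B}(\mathbb{Q}_p(\mathbb{N}))$ the following are equivalent: (a) $A\in\mathcal{K}(\mathbb{Q}_p(\mathbb{N}))$; (b) the matrix entries of $A$ converge to zero, i.e. for every $\varepsilon>0$ only finitely many pairs $(i,j)$ satisfy $|A_{ij}|_p>\varepsilon$; (c) $A$ maps norm-bounded sets onto relatively norm-compact subsets of $\mathbb{Q}_p(\mathbb{N})$. Moreover, the set of operators with these properties is an ideal of $\mathcal{B}(\mathbb{Q}_p(\mathbb{N}))$ that is closed under $A\mapsto A^*$.
   Context: $\mathbb{Q}_p(\mathbb{N})$ is the set of maps $\xi:\mathbb{N}\to\mathbb{Q}_p$ with $|\xi(i)|_p\le1$ for all but finitely many $i$, a $\mathbb{Z}_p$-module under coordinatewise operations, with the topology $\tau$ in which $A\subseteq\mathbb{Q}_p(\mathbb{N})$ is open iff for every finite $P\subseteq\mathbb{N}$ the set $A\cap\big(\prod_{i\in P}\mathbb{Q}_p\times\prod_{j\notin P}\mathbb{Z}_p\big)$ is open in the product topology. $\mathcal{B}(\mathbb{Q}_p(\mathbb{N}))$ is the algebra of $\tau$-continuous $\mathbb{Z}_p$-linear maps; the norm on $\mathbb{Q}_p(\mathbb{N})$ is $\|\xi\|=\max_i|\xi(i)|_p$. Matrix entries: $A_{ij}=(A\delta_j)(i)$ where $\delta_j$ is the indicator of $\{j\}$. $\mathcal{K}(\mathbb{Q}_p(\mathbb{N}))$ is the set of operators mapping norm-bounded sets onto relatively $\tau$-compact sets. The adjoint $A^*$ is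 the unique operator in $\mathcal{B}(\mathbb{Q}_p(\mathbb{N}))$ with $\langle A\xi,\eta\rangle=\langle\xi,A^*\eta\rangle$ for the pairing $\langle\xi,\eta\rangle=\iota\big(\sum_i(\xi(i)\eta(i)+\mathbb{Z}_p)\big)$, $\iota:\mathbb{Q}_p/\mathbb{Z}_p\hookrightarrow\mathbb{R}/\mathbb{Z}\cong S^1$ canonical; its matrix is the transpose of that of $A$. *)

theory Defs
  imports "HOL-Analysis.Analysis"
begin

text \<open>We use Q_p = lim_n Q_p/p^n Z_p and Q_p/p^n Z_p = Z[1/p]/p^n Z.  A p-adic number x is
  represented by the sequence of its canonical residues x n in Z[1/p] \<inter> [0, p^n), i.e. x n is
  the residue of x modulo p^n Z_p.  In particular x 0 is the class of x in Q_p/Z_p, represented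
  in Z[1/p] \<inter> [0,1).\<close>

definition Zinv :: "nat \<Rightarrow> rat set" where
  "Zinv p = {q. \<exists>k::nat. \<exists>a::int. q = of_int a / of_nat p ^ k}"

definition rmod :: "nat \<Rightarrow> nat \<Rightarrow> rat \<Rightarrow> rat" where
  "rmod p n q = q - of_nat p ^ n * of_int \<lfloor>q / of_nat p ^ n\<rfloor>"

definition Qp :: "nat \<Rightarrow> (nat \<Rightarrow> rat) set" where
  "Qp p = {x. \<forall>n. x n \<in> Zinv p \<and> 0 \<le> x n \<and> x n < of_nat p ^ n \<and> rmod p n (x (Suc n)) = x n}"

definition qp_zero :: "nat \<Rightarrow> rat" where
  "qp_zero = (\<lambda>n. 0)"

definition qp_one :: "nat \<Rightarrow> nat \<Rightarrow> rat" where
  "qp_one p = (\<lambda>n. rmod p n 1)"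

definition qp_add :: "nat \<Rightarrow> (nat \<Rightarrow> rat) \<Rightarrow> (nat \<Rightarrow> rat) \<Rightarrow> nat \<Rightarrow> rat" where
  "qp_add p x y = (\<lambda>n. rmod p n (x n + y n))"

definition qp_neg :: "nat \<Rightarrow> (nat \<Rightarrow> rat) \<Rightarrow> nat \<Rightarrow> rat" where
  "qp_neg p x = (\<lambda>n. rmod p n (- x n))"

text \<open>Exponent of the denominator of x (a bound for the denominators of all x n).\<close>
definition dexp :: "nat \<Rightarrow> (nat \<Rightarrow> rat) \<Rightarrow> nat" where
  "dexp p x = (LEAST k. \<exists>a::int. x 0 * of_nat p ^ k = of_int a)"

definition qp_mult :: "nat \<Rightarrow> (nat \<Rightarrow> rat) \<Rightarrow> (nat \<Rightarrow> rat) \<Rightarrow> nat \<Rightarrow> rat" where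
  "qp_mult p x y = (\<lambda>n. let m = n + dexp p x + dexp p y in rmod p n (x m * y m))"

definition qp_norm :: "nat \<Rightarrow> (nat \<Rightarrow> rat) \<Rightarrow> real" where
  "qp_norm p x = (if (\<forall>n. x n = 0) then 0
     else if x 0 \<noteq> 0 then real p ^ dexp p x
     else inverse (real p ^ (GREATEST n. x n = 0)))"

definition Zp :: "nat \<Rightarrow> (nat \<Rightarrow> rat) set" where
  "Zp p = {x \<in> Qp p. qp_norm p x \<le> 1}"

definition qp_top :: "nat \<Rightarrow> (nat \<Rightarrow> rat) topology" where
  "qp_top p = topology (\<lambda>U. U \<subseteq> Qp p \<and>
     (\<forall>x\<in>U. \<exists>e>0. \<forall>y\<in>Qp p. qp_norm p (qp_add p y (qp_neg p x)) < e \<longrightarrow> y \<in> U))"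

type_synonym qpseq = "nat \<Rightarrow> nat \<Rightarrow> rat"

definition QN :: "nat \<Rightarrow> qpseq set" where
  "QN p = {\<xi>. (\<forall>i. \<xi> i \<in> Qp p) \<and> finite {i. qp_norm p (\<xi> i) > 1}}"

definition qn_zero :: qpseq where
  "qn_zero = (\<lambda>i. qp_zero)"

definition qn_add :: "nat \<Rightarrow> qpseq \<Rightarrow> qpseq \<Rightarrow> qpseq" where
  "qn_add p \<xi> \<eta> = (\<lambda>i. qp_add p (\<xi> i) (\<eta> i))"

definition qn_neg :: "nat \<Rightarrow> qpseq \<Rightarrow> qpseq" where
  "qn_neg p \<xi> = (\<lambda>i. qp_neg p (\<xi> i))"

definition qn_smul :: "nat \<Rightarrow> (nat \<Rightarrow> rat) \<Rightarrow> qpseq \<Rightarrow> qpseq" where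
  "qn_smul p a \<xi> = (\<lambda>i. qp_mult p a (\<xi> i))"

definition qn_norm :: "nat \<Rightarrow> qpseq \<Rightarrow> real" where
  "qn_norm p \<xi> = (SUP i. qp_norm p (\<xi> i))"

definition XP :: "nat \<Rightarrow> nat set \<Rightarrow> qpseq set" where
  "XP p P = {\<xi>. (\<forall>i. \<xi> i \<in> Qp p) \<and> (\<forall>j. j \<notin> P \<longrightarrow> \<xi> j \<in> Zp p)}"

definition tau :: "nat \<Rightarrow> qpseq topology" where
  "tau p = topology (\<lambda>U. U \<subseteq> QN p \<and> (\<forall>P. finite P \<longrightarrow>
      openin (subtopology (product_topology (\<lambda>_. qp_top p) UNIV) (XP p P)) (U \<inter> XP p P)))"

definition ntop :: "nat \<Rightarrow> qpseq topology" where
  "ntop p = topology (\<lambda>U. U \<subseteq> QN p \<and>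
     (\<forall>\<xi>\<in>U. \<exists>e>0. \<forall>\<eta>\<in>QN p. qn_norm p (qn_add p \<eta> (qn_neg p \<xi>)) < e \<longrightarrow> \<eta> \<in> U))"

type_synonym qpop = "qpseq \<Rightarrow> qpseq"

definition Bop :: "nat \<Rightarrow> qpop set" where
  "Bop p = {A. continuous_map (tau p) (tau p) A \<and>
     (\<forall>\<xi>\<in>QN p. \<forall>\<eta>\<in>QN p. A (qn_add p \<xi> \<eta>) = qn_add p (A \<xi>) (A \<eta>)) \<and>
     (\<forall>a\<in>Zp p. \<forall>\<xi>\<in>QN p. A (qn_smul p a \<xi>) = qn_smul p a (A \<xi>))}"

definition delta :: "nat \<Rightarrow> nat \<Rightarrow> qpseq" where
  "delta p j = (\<lambda>i. if i = j then qp_one p else qp_zero)"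

definition entry :: "nat \<Rightarrow> qpop \<Rightarrow> nat \<Rightarrow> nat \<Rightarrow> nat \<Rightarrow> rat" where
  "entry p A i j = A (delta p j) i"

definition nbounded :: "nat \<Rightarrow> qpseq set \<Rightarrow> bool" where
  "nbounded p S \<longleftrightarrow> (\<exists>C. \<forall>\<xi>\<in>S. qn_norm p \<xi> \<le> C)"

definition isK :: "nat \<Rightarrow> qpop \<Rightarrow> bool" where
  "isK p A \<longleftrightarrow> (\<forall>S. S \<subseteq> QN p \<and> nbounded p S \<longrightarrow> (\<exists>K. compactin (tau p) K \<and> A ` S \<subseteq> K))"

definition maps_to_norm_compact :: "nat \<Rightarrow> qpop \<Rightarrow> bool" where
  "maps_to_norm_compact p A \<longleftrightarrow>
     (\<forall>S. S \<subseteq> QN p \<and> nbounded p S \<longrightarrow> (\<exists>K. compactin (ntop p) K \<and> A ` S \<subseteq> K))"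

definition entries_to_zero :: "nat \<Rightarrow> qpop \<Rightarrow> bool" where
  "entries_to_zero p A \<longleftrightarrow> (\<forall>e>0. finite {(i, j). qp_norm p (entry p A i j) > e})"

text \<open>The pairing <xi,eta> = iota(sum_i (xi(i) eta(i) + Z_p)), with values in R/Z represented by
  the representative in [0,1).  The class of a p-adic number modulo Z_p is its residue at
  level 0, an element of Z[1/p] \<inter> [0,1).\<close>
definition qn_pair :: "nat \<Rightarrow> qpseq \<Rightarrow> qpseq \<Rightarrow> rat" where
  "qn_pair p \<xi> \<eta> = frac (\<Sum>i\<in>{i. qp_mult p (\<xi> i) (\<eta> i) 0 \<noteq> 0}. qp_mult p (\<xi> i) (\<eta> i) 0)"

definition is_adjoint :: "nat \<Rightarrow> qpop \<Rightarrow> qpop \<Rightarrow> bool" where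
  "is_adjoint p A B \<longleftrightarrow> B \<in> Bop p \<and>
     (\<forall>\<xi>\<in>QN p. \<forall>\<eta>\<in>QN p. qn_pair p (A \<xi>) \<eta> = qn_pair p \<xi> (B \<eta>))"

end

theory Submission
  imports Defs
begin

text \<open>A p-adic number is handled through its residues \<open>x n\<close> modulo \<open>p\<^sup>n Z\<^sub>p\<close>, so
  \<open>|x|\<^sub>p \<le> p\<^sup>-\<^sup>k\<close> says exactly \<open>x k = 0\<close>, and both \<open>\<tau>\<close> and the norm topology have
  neighbourhood bases of digit cylinders.  Condition (b) says that for every \<open>k\<close> only finitely
  many matrix entries are nonzero modulo \<open>p\<^sup>k Z\<^sub>p\<close>.

  (a) or (c) implies (b): the bounded family \<open>p\<^sup>-\<^sup>k \<delta>\<^sub>j\<close> is mapped into a compact set.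
  A \<open>\<tau>\<close>-compact set is bounded and lies in \<open>Z\<^sub>p\<close> outside finitely many coordinates, and a
  norm-compact set meets only finitely many classes modulo \<open>Z\<^sub>p\<^sup>N\<close>; so only finitely many rows
  (resp. columns) of the matrix modulo \<open>p\<^sup>k\<close> are nonzero, while \<open>\<tau>\<close>-continuity at \<open>0\<close>
  makes every row finite and every column is finite because \<open>A (p\<^sup>-\<^sup>k \<delta>\<^sub>j) \<in> Q\<^sub>p(\<nat>)\<close>.

  (b) implies (a) and (c): if \<open>\<parallel>\<xi>\<parallel> \<le> p\<^sup>d\<close>, the \<open>i\<close>-th coordinate of \<open>A \<xi>\<close> has valuation
  at least that of the \<open>i\<close>-th row minus \<open>d\<close> (truncate \<open>\<xi>\<close> and use continuity).  These row
  envelopes are compact (Koenig's lemma on the tree of digits), and by (b) only finitely many of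
  them leave \<open>Z\<^sub>p\<close> at each level, which makes their product compact for \<open>\<tau>\<close> and for the norm.

  Sums and \<open>Z\<^sub>p\<close>-multiples are handled by (b); products by continuity and boundedness of
  operators; adjoints because pairing \<open>p\<^sup>-\<^sup>k \<delta>\<^sub>j\<close> with \<open>\<delta>\<^sub>i\<close> identifies the \<open>k\<close>-th digit of
  \<open>A\<^sub>i\<^sub>j\<close> with that of \<open>A\<^sup>*\<^sub>j\<^sub>i\<close>.\<close>

section \<open>Finite subcovers and ball topologies\<close>

lemma istopology_ball_open:
  "istopology (\<lambda>U. U \<subseteq> S \<and> (\<forall>x\<in>U. \<exists>e>0. \<forall>y\<in>S. (d x y :: real) < e \<longrightarrow> y \<in> U))"
  unfolding istopology_def
proof (rule conjI; intro allI impI)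
  fix A B assume A: "A \<subseteq> S \<and> (\<forall>x\<in>A. \<exists>e>0. \<forall>y\<in>S. d x y < e \<longrightarrow> y \<in> A)"
    and B: "B \<subseteq> S \<and> (\<forall>x\<in>B. \<exists>e>0. \<forall>y\<in>S. d x y < e \<longrightarrow> y \<in> B)"
  show "A \<inter> B \<subseteq> S \<and> (\<forall>x\<in>A \<inter> B. \<exists>e>0. \<forall>y\<in>S. d x y < e \<longrightarrow> y \<in> A \<inter> B)"
  proof (intro conjI ballI)
    show "A \<inter> B \<subseteq> S" using A by blast
    fix x assume x: "x \<in> A \<inter> B"
    obtain e1 where e1: "e1 > 0" "\<forall>y\<in>S. d x y < e1 \<longrightarrow> y \<in> A" using A x by blast
    obtain e2 where e2: "e2 > 0" "\<forall>y\<in>S. d x y < e2 \<longrightarrow> y \<in> B" using B x by blast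
    show "\<exists>e>0. \<forall>y\<in>S. d x y < e \<longrightarrow> y \<in> A \<inter> B"
      using e1 e2 by (intro exI[of _ "min e1 e2"]) auto
  qed
next
  fix K assume K: "\<forall>U\<in>K. U \<subseteq> S \<and> (\<forall>x\<in>U. \<exists>e>0. \<forall>y\<in>S. d x y < e \<longrightarrow> y \<in> U)"
  show "\<Union>K \<subseteq> S \<and> (\<forall>x\<in>\<Union>K. \<exists>e>0. \<forall>y\<in>S. d x y < e \<longrightarrow> y \<in> \<Union>K)"
  proof (intro conjI ballI)
    show "\<Union>K \<subseteq> S" using K by auto
    fix x assume "x \<in> \<Union>K"
    then obtain U where U: "U \<in> K" "x \<in> U" by blast
    then obtain e where "e > 0" "\<forall>y\<in>S. d x y < e \<longrightarrow> y \<in> U" using K by blast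
    then show "\<exists>e>0. \<forall>y\<in>S. d x y < e \<longrightarrow> y \<in> \<Union>K" using U(1) by blast
  qed
qed

lemma topspace_ball_topology:
  "topspace (topology (\<lambda>U. U \<subseteq> S \<and> (\<forall>x\<in>U. \<exists>e>0. \<forall>y\<in>S. (d x y :: real) < e \<longrightarrow> y \<in> U))) = S"
  (is "topspace ?T = S")
proof
  have opens: "openin ?T = (\<lambda>U. U \<subseteq> S \<and> (\<forall>x\<in>U. \<exists>e>0. \<forall>y\<in>S. d x y < e \<longrightarrow> y \<in> U))"
    by (rule topology_inverse'[OF istopology_ball_open])
  show "topspace ?T \<subseteq> S"
    using openin_topspace[of ?T] unfolding opens by (rule conjunct1)
  have "openin ?T S"
    unfolding opens using zero_less_one by blast
  then show "S \<subseteq> topspace ?T" by (rule openin_subset)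
qed

lemma openin_ball_topology_iff:
  fixes d :: "'a \<Rightarrow> 'a \<Rightarrow> real"
  assumes r_pos: "\<And>k. 0 < r k" and r_small: "\<And>e. e > 0 \<Longrightarrow> \<exists>k. r k < e"
    and le_iff: "\<And>k x y. x \<in> S \<Longrightarrow> y \<in> S \<Longrightarrow> d x y \<le> r k \<longleftrightarrow> R k x y"
  shows "openin (topology (\<lambda>U. U \<subseteq> S \<and> (\<forall>x\<in>U. \<exists>e>0. \<forall>y\<in>S. d x y < e \<longrightarrow> y \<in> U))) U
    \<longleftrightarrow> U \<subseteq> S \<and> (\<forall>x\<in>U. \<exists>k. \<forall>y\<in>S. R k x y \<longrightarrow> y \<in> U)"
proof -
  have "openin (topology (\<lambda>U. U \<subseteq> S \<and> (\<forall>x\<in>U. \<exists>e>0. \<forall>y\<in>S. d x y < e \<longrightarrow> y \<in> U))) U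
      \<longleftrightarrow> U \<subseteq> S \<and> (\<forall>x\<in>U. \<exists>e>0. \<forall>y\<in>S. d x y < e \<longrightarrow> y \<in> U)"
    by (simp add: topology_inverse'[OF istopology_ball_open])
  also have "\<dots> \<longleftrightarrow> U \<subseteq> S \<and> (\<forall>x\<in>U. \<exists>k. \<forall>y\<in>S. R k x y \<longrightarrow> y \<in> U)"
  proof (intro conj_cong refl ball_cong)
    fix x assume "U \<subseteq> S" "x \<in> U"
    then have x: "x \<in> S" by blast
    show "(\<exists>e>0. \<forall>y\<in>S. d x y < e \<longrightarrow> y \<in> U) \<longleftrightarrow> (\<exists>k. \<forall>y\<in>S. R k x y \<longrightarrow> y \<in> U)"
    proof
      assume "\<exists>e>0. \<forall>y\<in>S. d x y < e \<longrightarrow> y \<in> U"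
      then obtain e k where e: "\<forall>y\<in>S. d x y < e \<longrightarrow> y \<in> U" and k: "r k < e"
        using r_small by blast
      have "y \<in> U" if "y \<in> S" "R k x y" for y
      proof -
        have "d x y \<le> r k" using le_iff[OF x that(1)] that(2) by blast
        then show ?thesis using e that(1) order_le_less_trans[OF _ k] by blast
      qed
      then show "\<exists>k. \<forall>y\<in>S. R k x y \<longrightarrow> y \<in> U" by blast
    next
      assume "\<exists>k. \<forall>y\<in>S. R k x y \<longrightarrow> y \<in> U"
      then obtain k where k: "\<forall>y\<in>S. R k x y \<longrightarrow> y \<in> U" by blast
      have "y \<in> U" if "y \<in> S" "d x y < r k" for y
        using k that le_iff[OF x that(1), of k] less_imp_le by blast
      then show "\<exists>e>0. \<forall>y\<in>S. d x y < e \<longrightarrow> y \<in> U" using r_pos by blast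
    qed
  qed
  finally show ?thesis .
qed

lemma compactin_transfer:
  assumes K: "compactin X K" and KY: "K \<subseteq> topspace Y"
    and loc: "\<And>U x. openin Y U \<Longrightarrow> x \<in> U \<Longrightarrow> x \<in> K \<Longrightarrow> \<exists>V. openin X V \<and> x \<in> V \<and> V \<inter> K \<subseteq> U"
  shows "compactin Y K"
  unfolding compactin_def
proof (intro conjI allI impI)
  show "K \<subseteq> topspace Y" by (rule KY)
  fix \<U> assume U: "(\<forall>U\<in>\<U>. openin Y U) \<and> K \<subseteq> \<Union>\<U>"
  define \<V> where "\<V> = {V. openin X V \<and> (\<exists>U\<in>\<U>. V \<inter> K \<subseteq> U)}"
  have "K \<subseteq> \<Union>\<V>"
  proof
    fix x assume x: "x \<in> K"
    then obtain U where "U \<in> \<U>" "x \<in> U" using U by blast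
    then obtain V where "openin X V" "x \<in> V" "V \<inter> K \<subseteq> U" using loc U x by meson
    then show "x \<in> \<Union>\<V>" unfolding \<V>_def using \<open>U \<in> \<U>\<close> by blast
  qed
  moreover have "\<forall>V\<in>\<V>. openin X V" unfolding \<V>_def by blast
  ultimately obtain \<F> where F: "finite \<F>" "\<F> \<subseteq> \<V>" "K \<subseteq> \<Union>\<F>"
    using K unfolding compactin_def by meson
  have "\<forall>V\<in>\<F>. \<exists>U. U \<in> \<U> \<and> V \<inter> K \<subseteq> U" using F(2) unfolding \<V>_def by blast
  then obtain g where g: "\<forall>V\<in>\<F>. g V \<in> \<U> \<and> V \<inter> K \<subseteq> g V" using bchoice[of \<F>] by meson
  show "\<exists>\<F>. finite \<F> \<and> \<F> \<subseteq> \<U> \<and> K \<subseteq> \<Union>\<F>"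
  proof (intro exI[of _ "g ` \<F>"] conjI)
    show "finite (g ` \<F>)" using F(1) by blast
    show "g ` \<F> \<subseteq> \<U>" using g by blast
    show "K \<subseteq> \<Union>(g ` \<F>)" using F(3) g by blast
  qed
qed

lemma finite_subcover_UN:
  assumes I: "finite I" and cov: "\<And>c. c \<in> I \<Longrightarrow> \<exists>\<F>. finite \<F> \<and> \<F> \<subseteq> \<U> \<and> T c \<subseteq> \<Union>\<F>"
    and S: "S \<subseteq> (\<Union>c\<in>I. T c)"
  shows "\<exists>\<F>. finite \<F> \<and> \<F> \<subseteq> \<U> \<and> S \<subseteq> \<Union>\<F>"
proof -
  have "\<forall>c\<in>I. \<exists>\<F>. finite \<F> \<and> \<F> \<subseteq> \<U> \<and> T c \<subseteq> \<Union>\<F>" using cov by blast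
  then obtain g where g: "\<forall>c\<in>I. finite (g c) \<and> g c \<subseteq> \<U> \<and> T c \<subseteq> \<Union>(g c)"
    by (rule bchoice[THEN exE])
  have "S \<subseteq> \<Union>(\<Union>c\<in>I. g c)"
  proof
    fix x assume "x \<in> S"
    then obtain c where c: "c \<in> I" "x \<in> T c" using S by blast
    then obtain F where "F \<in> g c" "x \<in> F" using g by blast
    then show "x \<in> \<Union>(\<Union>c\<in>I. g c)" using c(1) by blast
  qed
  moreover have "finite (\<Union>c\<in>I. g c)" using I g by simp
  moreover have "(\<Union>c\<in>I. g c) \<subseteq> \<U>" using g by blast
  ultimately show ?thesis by blast
qed

lemma not_finite_subcover_UN:
  assumes S: "\<not> (\<exists>\<F>. finite \<F> \<and> \<F> \<subseteq> \<U> \<and> S \<subseteq> \<Union>\<F>)" and I: "finite I"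
    and cover: "S \<subseteq> (\<Union>c\<in>I. T c)"
  shows "\<exists>c\<in>I. \<not> (\<exists>\<F>. finite \<F> \<and> \<F> \<subseteq> \<U> \<and> T c \<subseteq> \<Union>\<F>)"
proof (rule ccontr)
  assume "\<not> ?thesis"
  then have "\<exists>\<F>. finite \<F> \<and> \<F> \<subseteq> \<U> \<and> S \<subseteq> \<Union>\<F>"
    by (intro finite_subcover_UN[OF I _ cover]) blast
  with S show False ..
qed

lemma finite_pairs_rows:
  assumes P: "finite P" and rows: "\<And>i. i \<in> P \<Longrightarrow> finite {j. R i j}"
  shows "finite {(i, j). i \<in> P \<and> R i j}"
proof -
  have "{(i, j). i \<in> P \<and> R i j} = (\<Union>i\<in>P. (\<lambda>j. (i, j)) ` {j. R i j})" by auto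
  then show ?thesis using P rows by simp
qed

lemma sum_nonzero_eq_single:
  fixes g :: "'a \<Rightarrow> 'b::comm_monoid_add"
  assumes "\<forall>i'. i' \<noteq> i \<longrightarrow> g i' = 0"
  shows "(\<Sum>i'\<in>{i'. g i' \<noteq> 0}. g i') = g i"
proof (cases "g i = 0")
  case True
  then have "{i'. g i' \<noteq> 0} = {}" using assms by auto
  then show ?thesis using True by simp
next
  case False
  then have "{i'. g i' \<noteq> 0} = {i}" using assms by auto
  then show ?thesis by simp
qed

section \<open>Residues of p-adic numbers\<close>

definition pcong :: "nat \<Rightarrow> nat \<Rightarrow> rat \<Rightarrow> rat \<Rightarrow> bool" where
  "pcong p n q r \<longleftrightarrow> (q - r) / of_nat p ^ n \<in> \<int>"

text \<open>\<open>val_ge p x d k\<close> says \<open>p\<^sup>d x \<in> p\<^sup>k Z\<^sub>p\<close>, i.e. \<open>v\<^sub>p(x) \<ge> k - d\<close>; it only inspects the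
  residue \<open>x k\<close>.  Two natural parameters make negative bounds \<open>k - d\<close> expressible.\<close>
definition val_ge :: "nat \<Rightarrow> (nat \<Rightarrow> rat) \<Rightarrow> nat \<Rightarrow> nat \<Rightarrow> bool" where
  "val_ge p x d k \<longleftrightarrow> pcong p k (x k * of_nat p ^ d) 0"

definition qp_ppow :: "nat \<Rightarrow> nat \<Rightarrow> nat \<Rightarrow> rat" where
  "qp_ppow p e = (\<lambda>n. rmod p n (of_nat p ^ e))"

definition qp_pinv :: "nat \<Rightarrow> nat \<Rightarrow> nat \<Rightarrow> rat" where
  "qp_pinv p e = (\<lambda>n. rmod p n (1 / of_nat p ^ e))"

locale padic =
  fixes p :: nat
  assumes p_ge_2: "2 \<le> p"
begin

lemma p_power_pos: "(0::rat) < of_nat p ^ n"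
  using p_ge_2 by simp

lemma p_power_nonzero: "(of_nat p::rat) ^ n \<noteq> 0"
  using p_power_pos by (metis less_irrefl)

lemma p_gt_1: "(1::real) < real p" using p_ge_2 by simp

lemma inverse_power_pos: "0 < inverse (real p ^ k)" using p_gt_1 by simp

lemma inverse_power_less: "e > 0 \<Longrightarrow> \<exists>k. inverse (real p ^ k) < e"
proof -
  assume e: "e > 0"
  have "inverse (real p) < 1" using p_gt_1 by (simp add: inverse_less_1_iff)
  then obtain k where "inverse (real p) ^ k < e" using real_arch_pow_inv[OF e] by blast
  then show ?thesis by (auto simp: power_inverse)
qed

lemma rmod_pcong: "pcong p n (rmod p n q) q"
  unfolding pcong_def rmod_def using p_power_nonzero[of n] by simp

lemma pcong_refl: "pcong p n q q" by (simp add: pcong_def)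

lemma pcong_sym: "pcong p n q r \<Longrightarrow> pcong p n r q"
proof -
  assume "pcong p n q r"
  then have "- ((q - r) / of_nat p ^ n) \<in> \<int>" unfolding pcong_def using Ints_minus by blast
  then show ?thesis unfolding pcong_def by (simp add: minus_divide_left)
qed

lemma pcong_trans: "pcong p n q r \<Longrightarrow> pcong p n r s \<Longrightarrow> pcong p n q s"
proof -
  assume a: "pcong p n q r" "pcong p n r s"
  have "(q - r) / of_nat p ^ n + (r - s) / of_nat p ^ n \<in> \<int>"
    using a unfolding pcong_def by (intro Ints_add)
  then show ?thesis unfolding pcong_def by (simp add: add_divide_distrib[symmetric])
qed

lemma pcong_add: "pcong p n q r \<Longrightarrow> pcong p n q' r' \<Longrightarrow> pcong p n (q + q') (r + r')"
proof -
  assume a: "pcong p n q r" "pcong p n q' r'"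
  have "(q - r) / of_nat p ^ n + (q' - r') / of_nat p ^ n \<in> \<int>"
    using a unfolding pcong_def by (intro Ints_add)
  then show ?thesis unfolding pcong_def by (simp add: add_divide_distrib[symmetric] algebra_simps)
qed

lemma pcong_neg: "pcong p n q r \<Longrightarrow> pcong p n (- q) (- r)"
  using pcong_sym unfolding pcong_def by (simp add: algebra_simps)

lemma pcong_weaken: "n \<le> m \<Longrightarrow> pcong p m q r \<Longrightarrow> pcong p n q r"
proof -
  assume a: "n \<le> m" "pcong p m q r"
  have "(q - r) / of_nat p ^ m * of_nat p ^ (m - n) \<in> \<int>"
    using a unfolding pcong_def by (intro Ints_mult) (auto intro: Ints_power)
  moreover have "(q - r) / of_nat p ^ m * of_nat p ^ (m - n) = (q - r) / of_nat p ^ n"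
  proof -
    obtain d where d: "m = n + d" using a(1) le_Suc_ex by blast
    show ?thesis using p_power_nonzero[of n] p_power_nonzero[of d] unfolding d by (simp add: power_add)
  qed
  ultimately show ?thesis unfolding pcong_def by simp
qed

lemma pcong_mult_int: "pcong p n q r \<Longrightarrow> c \<in> \<int> \<Longrightarrow> pcong p n (c * q) (c * r)"
proof -
  assume a: "pcong p n q r" "c \<in> \<int>"
  have "c * ((q - r) / of_nat p ^ n) \<in> \<int>" using a unfolding pcong_def by (intro Ints_mult)
  then show ?thesis unfolding pcong_def by (simp add: algebra_simps)
qed

lemma pcongE: "pcong p n q r \<Longrightarrow> (\<And>t. t \<in> \<int> \<Longrightarrow> q = r + of_nat p ^ n * t \<Longrightarrow> thesis) \<Longrightarrow> thesis"
proof -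
  assume a: "pcong p n q r" and b: "\<And>t. t \<in> \<int> \<Longrightarrow> q = r + of_nat p ^ n * t \<Longrightarrow> thesis"
  show thesis
    apply (rule b[of "(q - r) / of_nat p ^ n"])
    using a p_power_nonzero[of n] unfolding pcong_def by auto
qed

lemma rmod_eq_iff_pcong: "rmod p n q = rmod p n r \<longleftrightarrow> pcong p n q r"
proof
  assume "rmod p n q = rmod p n r"
  then show "pcong p n q r" using rmod_pcong[of n q] rmod_pcong[of n r] pcong_sym pcong_trans by metis
next
  assume "pcong p n q r"
  then obtain t where t: "t \<in> \<int>" "q = r + of_nat p ^ n * t" by (rule pcongE)
  then obtain k where k: "t = of_int k" by (auto elim: Ints_cases)
  have "q / of_nat p ^ n = r / of_nat p ^ n + of_int k" using t k p_power_nonzero[of n] by (simp add: field_simps)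
  then have "\<lfloor>q / of_nat p ^ n\<rfloor> = \<lfloor>r / of_nat p ^ n\<rfloor> + k" by simp
  then show "rmod p n q = rmod p n r" unfolding rmod_def using t k by (simp add: algebra_simps)
qed

lemma rmod_ge: "0 \<le> rmod p n q"
proof -
  have "of_int \<lfloor>q / of_nat p ^ n\<rfloor> \<le> q / of_nat p ^ n" by simp
  then have "of_nat p ^ n * of_int \<lfloor>q / of_nat p ^ n\<rfloor> \<le> of_nat p ^ n * (q / of_nat p ^ n)"
    using p_power_pos[of n] by (intro mult_left_mono) auto
  then have "of_nat p ^ n * of_int \<lfloor>q / of_nat p ^ n\<rfloor> \<le> q"
    using p_power_nonzero[of n] p_ge_2 by simp
  then show ?thesis unfolding rmod_def by simp
qed

lemma rmod_less: "rmod p n q < of_nat p ^ n"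
proof -
  have "q / of_nat p ^ n < of_int \<lfloor>q / of_nat p ^ n\<rfloor> + 1" by linarith
  then have "q < of_nat p ^ n * (of_int \<lfloor>q / of_nat p ^ n\<rfloor> + 1)"
    using p_power_pos[of n] by (simp add: field_simps)
  then show ?thesis unfolding rmod_def by (simp add: algebra_simps)
qed

lemma rmod_id: "0 \<le> q \<Longrightarrow> q < of_nat p ^ n \<Longrightarrow> rmod p n q = q"
proof -
  assume a: "0 \<le> q" "q < of_nat p ^ n"
  have "0 \<le> q / of_nat p ^ n" "q / of_nat p ^ n < 1" using a p_power_pos[of n] by (auto simp: field_simps)
  then have "\<lfloor>q / of_nat p ^ n\<rfloor> = 0" by (simp add: floor_eq_iff)
  then show ?thesis unfolding rmod_def by simp
qed

lemma pcong_canonical_eq: "0 \<le> q \<Longrightarrow> q < of_nat p ^ n \<Longrightarrow> 0 \<le> r \<Longrightarrow> r < of_nat p ^ n \<Longrightarrow> pcong p n q r \<Longrightarrow> q = r"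
proof -
  assume a: "0 \<le> q" "q < of_nat p ^ n" "0 \<le> r" "r < of_nat p ^ n" "pcong p n q r"
  have "rmod p n q = rmod p n r" using a(5) rmod_eq_iff_pcong by blast
  then show ?thesis using rmod_id[OF a(1,2)] rmod_id[OF a(3,4)] by simp
qed

lemma rmod_rmod: "n \<le> m \<Longrightarrow> rmod p n (rmod p m q) = rmod p n q"
  using rmod_eq_iff_pcong pcong_weaken rmod_pcong by metis

lemma rmod_zero[simp]: "rmod p n 0 = 0"
  by (simp add: rmod_def)

lemma pcong_zero_iff_rmod: "pcong p n q 0 \<longleftrightarrow> rmod p n q = 0"
  using rmod_eq_iff_pcong[of n q 0] by simp

lemma rmod_0_Ints: "q \<in> \<int> \<Longrightarrow> rmod p 0 q = 0"
  unfolding rmod_def by (auto elim: Ints_cases)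

lemma Zinv_int: "of_int a \<in> Zinv p"
  unfolding Zinv_def by (rule CollectI, rule exI[of _ 0]) simp

lemma Zinv_add: "q \<in> Zinv p \<Longrightarrow> r \<in> Zinv p \<Longrightarrow> q + r \<in> Zinv p"
proof -
  assume "q \<in> Zinv p" "r \<in> Zinv p"
  then obtain k a l b where q: "q = of_int a / of_nat p ^ k" and r: "r = of_int b / of_nat p ^ l"
    unfolding Zinv_def by auto
  have "q + r = of_int (a * int p ^ l + b * int p ^ k) / of_nat p ^ (k + l)"
    unfolding q r using p_power_nonzero[of k] p_power_nonzero[of l] by (simp add: field_simps power_add)
  then show ?thesis unfolding Zinv_def by blast
qed

lemma Zinv_neg: "q \<in> Zinv p \<Longrightarrow> - q \<in> Zinv p"
proof -
  assume "q \<in> Zinv p"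
  then obtain k a where q: "q = of_int a / of_nat p ^ k" unfolding Zinv_def by auto
  have "- q = of_int (- a) / of_nat p ^ k" unfolding q by simp
  then show ?thesis unfolding Zinv_def by blast
qed

lemma Zinv_mult: "q \<in> Zinv p \<Longrightarrow> r \<in> Zinv p \<Longrightarrow> q * r \<in> Zinv p"
proof -
  assume "q \<in> Zinv p" "r \<in> Zinv p"
  then obtain k a l b where q: "q = of_int a / of_nat p ^ k" and r: "r = of_int b / of_nat p ^ l"
    unfolding Zinv_def by auto
  have "q * r = of_int (a * b) / of_nat p ^ (k + l)"
    unfolding q r by (simp add: power_add)
  then show ?thesis unfolding Zinv_def by blast
qed

lemma Zinv_inv_pow: "1 / of_nat p ^ k \<in> Zinv p"
  unfolding Zinv_def by (rule CollectI, rule exI[of _ k], rule exI[of _ 1]) simp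

lemma Zinv_pow: "of_nat p ^ k \<in> Zinv p"
  using Zinv_int[of "int p ^ k"] by simp

lemma Zinv_rmod: "q \<in> Zinv p \<Longrightarrow> rmod p n q \<in> Zinv p"
  unfolding rmod_def using Zinv_add Zinv_neg Zinv_mult Zinv_pow Zinv_int
  by (metis diff_conv_add_uminus)

lemma Zinv_den: "q \<in> Zinv p \<Longrightarrow> \<exists>k. q * of_nat p ^ k \<in> \<int>"
proof -
  assume "q \<in> Zinv p"
  then obtain k a where q: "q = of_int a / of_nat p ^ k" unfolding Zinv_def by auto
  then have "q * of_nat p ^ k = of_int a" using p_power_nonzero[of k] by simp
  then show ?thesis by (metis Ints_of_int)
qed

lemma QpD: "x \<in> Qp p \<Longrightarrow> x n \<in> Zinv p \<and> 0 \<le> x n \<and> x n < of_nat p ^ n \<and> rmod p n (x (Suc n)) = x n"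
  unfolding Qp_def by blast

lemma QpI: "(\<And>n. x n \<in> Zinv p \<and> 0 \<le> x n \<and> x n < of_nat p ^ n \<and> rmod p n (x (Suc n)) = x n) \<Longrightarrow> x \<in> Qp p"
  unfolding Qp_def by blast

lemma rmod_Qp_digit: "x \<in> Qp p \<Longrightarrow> n \<le> m \<Longrightarrow> rmod p n (x m) = x n"
proof (induction m)
  case 0
  then show ?case using QpD[of x 0] rmod_id by simp
next
  case (Suc m)
  show ?case
  proof (cases "n = Suc m")
    case True
    then show ?thesis using QpD[OF Suc(2), of n] rmod_id by simp
  next
    case False
    then have "n \<le> m" using Suc by simp
    then have "rmod p n (x (Suc m)) = rmod p n (rmod p m (x (Suc m)))" using rmod_rmod by simp
    also have "\<dots> = rmod p n (x m)" using QpD[OF Suc(2), of m] by simp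
    also have "\<dots> = x n" using Suc \<open>n \<le> m\<close> by simp
    finally show ?thesis .
  qed
qed

lemma Qp_digit_pcong: "x \<in> Qp p \<Longrightarrow> n \<le> m \<Longrightarrow> pcong p n (x m) (x n)"
proof -
  assume "x \<in> Qp p" "n \<le> m"
  then have "rmod p n (x m) = x n" by (rule rmod_Qp_digit)
  then show ?thesis using rmod_pcong[of n "x m"] pcong_sym by metis
qed

lemma Qp_digit_eq_mono: "x \<in> Qp p \<Longrightarrow> y \<in> Qp p \<Longrightarrow> n \<le> m \<Longrightarrow> x m = y m \<Longrightarrow> x n = y n"
  using rmod_Qp_digit[of x n m] rmod_Qp_digit[of y n m] by simp

lemma Qp_zero_down: "x \<in> Qp p \<Longrightarrow> x m = 0 \<Longrightarrow> n \<le> m \<Longrightarrow> x n = 0"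
  using rmod_Qp_digit rmod_zero by metis

lemma Qp_digit_0_Ints: "x \<in> Qp p \<Longrightarrow> x 0 \<in> \<int> \<Longrightarrow> x 0 = 0"
proof -
  assume a: "x \<in> Qp p" "x 0 \<in> \<int>"
  then have "0 \<le> x 0" "x 0 < 1" using QpD[OF a(1), of 0] by auto
  then show ?thesis using a(2) by (auto elim!: Ints_cases)
qed

lemma Qp_digit0_frac: "x \<in> Qp p \<Longrightarrow> frac (x 0) = x 0"
  using QpD[of x 0] by (simp add: frac_eq)

lemma dexp_Ints: "x \<in> Qp p \<Longrightarrow> x 0 * of_nat p ^ dexp p x \<in> \<int>"
proof -
  assume a: "x \<in> Qp p"
  obtain k where "x 0 * of_nat p ^ k \<in> \<int>" using Zinv_den QpD[OF a, of 0] by blast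
  then have ex: "\<exists>k. \<exists>b::int. x 0 * of_nat p ^ k = of_int b" by (auto elim!: Ints_cases)
  have "\<exists>b::int. x 0 * of_nat p ^ dexp p x = of_int b"
    unfolding dexp_def by (rule LeastI_ex[OF ex])
  then show ?thesis by auto
qed

lemma dexp_le: "x 0 * of_nat p ^ k \<in> \<int> \<Longrightarrow> dexp p x \<le> k"
proof -
  assume "x 0 * of_nat p ^ k \<in> \<int>"
  then have "\<exists>b::int. x 0 * of_nat p ^ k = of_int b" by (auto elim!: Ints_cases)
  then show ?thesis unfolding dexp_def by (rule Least_le)
qed

lemma dexp_digit0: "x 0 = y 0 \<Longrightarrow> dexp p x = dexp p y"
  unfolding dexp_def by simp

lemma Ints_mult_ppow: "q \<in> \<int> \<Longrightarrow> q * of_nat p ^ k \<in> \<int>"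
  by (intro Ints_mult) (auto intro: Ints_power)

lemma Ints_mult_ppow_mono: "q * of_nat p ^ d \<in> \<int> \<Longrightarrow> d \<le> D \<Longrightarrow> q * of_nat p ^ D \<in> \<int>"
proof -
  assume a: "q * of_nat p ^ d \<in> \<int>" "d \<le> D"
  then obtain e where e: "D = d + e" using le_Suc_ex by blast
  have "q * of_nat p ^ D = (q * of_nat p ^ d) * of_nat p ^ e" unfolding e by (simp add: power_add mult.assoc)
  then show ?thesis using Ints_mult_ppow[OF a(1)] by simp
qed

lemma digit_mult_ppow_Ints: "x \<in> Qp p \<Longrightarrow> dexp p x \<le> D \<Longrightarrow> x m * of_nat p ^ D \<in> \<int>"
proof -
  assume a: "x \<in> Qp p" "dexp p x \<le> D"
  have "pcong p 0 (x m) (x 0)" using Qp_digit_pcong[OF a(1), of 0 m] by simp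
  then obtain t where t: "t \<in> \<int>" "x m = x 0 + t" by (rule pcongE) simp
  have "x m * of_nat p ^ D = x 0 * of_nat p ^ D + t * of_nat p ^ D" unfolding t by (simp add: algebra_simps)
  moreover have "x 0 * of_nat p ^ D \<in> \<int>" using Ints_mult_ppow_mono[OF dexp_Ints[OF a(1)] a(2)] .
  ultimately show ?thesis using Ints_mult_ppow[OF t(1)] by simp
qed

lemma qp_zero_Qp: "qp_zero \<in> Qp p"
  unfolding qp_zero_def by (rule QpI) (use p_ge_2 in \<open>simp add: Zinv_int[of 0, simplified] p_power_pos\<close>)

lemma qp_one_Qp: "qp_one p \<in> Qp p"
  unfolding qp_one_def
  by (rule QpI) (simp add: Zinv_rmod Zinv_int[of 1, simplified] rmod_ge rmod_less rmod_rmod)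

lemma qp_one_0: "qp_one p 0 = 0"
  unfolding qp_one_def using rmod_0_Ints[of 1] by simp

lemma qp_add_digit: "qp_add p x y n = rmod p n (x n + y n)" unfolding qp_add_def ..

lemma qp_neg_digit: "qp_neg p x n = rmod p n (- x n)" unfolding qp_neg_def ..

lemma qp_add_Qp: "x \<in> Qp p \<Longrightarrow> y \<in> Qp p \<Longrightarrow> qp_add p x y \<in> Qp p"
  unfolding qp_add_def
proof (rule QpI, intro conjI)
  fix n assume a: "x \<in> Qp p" "y \<in> Qp p"
  show "rmod p n (x n + y n) \<in> Zinv p" using QpD[OF a(1)] QpD[OF a(2)] by (intro Zinv_rmod Zinv_add) auto
  show "0 \<le> rmod p n (x n + y n)" by (rule rmod_ge)
  show "rmod p n (x n + y n) < of_nat p ^ n" by (rule rmod_less)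
  have "pcong p n (x (Suc n) + y (Suc n)) (x n + y n)"
    using Qp_digit_pcong[OF a(1), of n "Suc n"] Qp_digit_pcong[OF a(2), of n "Suc n"] by (intro pcong_add) auto
  then show "rmod p n (rmod p (Suc n) (x (Suc n) + y (Suc n))) = rmod p n (x n + y n)"
    using rmod_rmod rmod_eq_iff_pcong by (metis le_SucI order_refl)
qed

lemma qp_neg_Qp: "x \<in> Qp p \<Longrightarrow> qp_neg p x \<in> Qp p"
  unfolding qp_neg_def
proof (rule QpI, intro conjI)
  fix n assume a: "x \<in> Qp p"
  show "rmod p n (- x n) \<in> Zinv p" using QpD[OF a(1)] by (intro Zinv_rmod Zinv_neg) auto
  show "0 \<le> rmod p n (- x n)" by (rule rmod_ge)
  show "rmod p n (- x n) < of_nat p ^ n" by (rule rmod_less)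
  have "pcong p n (- x (Suc n)) (- x n)"
    using Qp_digit_pcong[OF a(1), of n "Suc n"] by (intro pcong_neg) auto
  then show "rmod p n (rmod p (Suc n) (- x (Suc n))) = rmod p n (- x n)"
    using rmod_rmod rmod_eq_iff_pcong by (metis le_SucI order_refl)
qed

lemma qp_mult_pcong:
  assumes x: "x \<in> Qp p" and y: "y \<in> Qp p"
    and M: "n + dexp p x + dexp p y \<le> M"
    and q: "pcong p M q (x M)" and r: "pcong p M r (y M)"
  shows "pcong p n (q * r) (x (n + dexp p x + dexp p y) * y (n + dexp p x + dexp p y))"
proof -
  define m where "m = n + dexp p x + dexp p y"
  have qm: "pcong p m q (x m)" using pcong_trans[OF pcong_weaken[OF _ q] pcong_weaken[OF _ Qp_digit_pcong[OF x]]] M unfolding m_def by auto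
  have rm: "pcong p m r (y m)" using pcong_trans[OF pcong_weaken[OF _ r] pcong_weaken[OF _ Qp_digit_pcong[OF y]]] M unfolding m_def by auto
  obtain s where s: "s \<in> \<int>" "q = x m + of_nat p ^ m * s" using qm by (rule pcongE)
  obtain t where t: "t \<in> \<int>" "r = y m + of_nat p ^ m * t" using rm by (rule pcongE)
  have dx: "x m * of_nat p ^ dexp p x \<in> \<int>" using digit_mult_ppow_Ints[OF x] by simp
  have dy: "y m * of_nat p ^ dexp p y \<in> \<int>" using digit_mult_ppow_Ints[OF y] by simp
  have eq: "(q * r - x m * y m) / of_nat p ^ n =
     s * of_nat p ^ dexp p x * (y m * of_nat p ^ dexp p y) + t * of_nat p ^ dexp p y * (x m * of_nat p ^ dexp p x)
     + s * t * of_nat p ^ (dexp p x + dexp p y + m)"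
    unfolding s(2) t(2) m_def using p_power_nonzero[of n] by (simp add: field_simps power_add)
  have "(q * r - x m * y m) / of_nat p ^ n \<in> \<int>"
    unfolding eq
    by (intro Ints_add Ints_mult[OF Ints_mult_ppow[OF s(1)] dy] Ints_mult[OF Ints_mult_ppow[OF t(1)] dx]
          Ints_mult_ppow Ints_mult s(1) t(1))
  then show ?thesis unfolding pcong_def m_def .
qed

lemma qp_mult_digit:
  assumes x: "x \<in> Qp p" and y: "y \<in> Qp p"
    and M: "n + dexp p x + dexp p y \<le> M"
    and q: "pcong p M q (x M)" and r: "pcong p M r (y M)"
  shows "qp_mult p x y n = rmod p n (q * r)"
  unfolding qp_mult_def Let_def using qp_mult_pcong[OF assms] rmod_eq_iff_pcong by metis

lemma qp_mult_digit_at: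
  assumes x: "x \<in> Qp p" and y: "y \<in> Qp p"
    and M: "n + dexp p x + dexp p y \<le> M"
  shows "qp_mult p x y n = rmod p n (x M * y M)"
  by (rule qp_mult_digit[OF x y M pcong_refl pcong_refl])

lemma qp_mult_Qp: "x \<in> Qp p \<Longrightarrow> y \<in> Qp p \<Longrightarrow> qp_mult p x y \<in> Qp p"
proof (rule QpI, intro conjI)
  fix n assume a: "x \<in> Qp p" "y \<in> Qp p"
  define m where "m = n + dexp p x + dexp p y"
  have e: "qp_mult p x y n = rmod p n (x m * y m)" unfolding qp_mult_def Let_def m_def ..
  show "qp_mult p x y n \<in> Zinv p" unfolding e using QpD[OF a(1)] QpD[OF a(2)] by (intro Zinv_rmod Zinv_mult) auto
  show "0 \<le> qp_mult p x y n" unfolding e by (rule rmod_ge)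
  show "qp_mult p x y n < of_nat p ^ n" unfolding e by (rule rmod_less)
  have "qp_mult p x y n = rmod p n (x (Suc m) * y (Suc m))"
    by (rule qp_mult_digit[OF a, of n "Suc m"]) (auto simp: m_def pcong_refl)
  moreover have "qp_mult p x y (Suc n) = rmod p (Suc n) (x (Suc m) * y (Suc m))"
    unfolding qp_mult_def Let_def m_def by simp
  ultimately show "rmod p n (qp_mult p x y (Suc n)) = qp_mult p x y n"
    using rmod_rmod by simp
qed

lemma qp_norm_nonneg: "0 \<le> qp_norm p x"
  unfolding qp_norm_def by auto

lemma dexp_pos: "x \<in> Qp p \<Longrightarrow> x 0 \<noteq> 0 \<Longrightarrow> 1 \<le> dexp p x"
proof (rule ccontr)
  assume a: "x \<in> Qp p" "x 0 \<noteq> 0" "\<not> 1 \<le> dexp p x"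
  then have "dexp p x = 0" by simp
  then have "x 0 \<in> \<int>" using dexp_Ints[OF a(1)] by simp
  then show False using Qp_digit_0_Ints[OF a(1)] a(2) by simp
qed

lemma Greatest_digit_zero_iff:
  assumes x: "x \<in> Qp p" and nz: "x N \<noteq> 0" and that: "x 0 = 0"
  shows "x k = 0 \<longleftrightarrow> k \<le> (GREATEST n. x n = 0)"
proof -
  have bnd: "\<forall>y. x y = 0 \<longrightarrow> y \<le> N"
    using Qp_zero_down[OF x] nz by (metis nat_le_linear)
  have g: "x (GREATEST n. x n = 0) = 0" using GreatestI_nat[of "\<lambda>n. x n = 0" 0 N] that bnd by blast
  show ?thesis
  proof
    assume "x k = 0" then show "k \<le> (GREATEST n. x n = 0)" using Greatest_le_nat[of "\<lambda>n. x n = 0" k N] bnd by blast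
  next
    assume "k \<le> (GREATEST n. x n = 0)" then show "x k = 0" using Qp_zero_down[OF x g] by simp
  qed
qed

lemma qp_norm_le_inverse_iff: "x \<in> Qp p \<Longrightarrow> qp_norm p x \<le> inverse (real p ^ k) \<longleftrightarrow> x k = 0"
proof -
  assume x: "x \<in> Qp p"
  show ?thesis
  proof (cases "\<forall>n. x n = 0")
    case True then show ?thesis unfolding qp_norm_def by simp
  next
    case False
    then obtain N where N: "x N \<noteq> 0" by auto
    show ?thesis
    proof (cases "x 0 = 0")
      case False
      have h1: "real p \<le> real p ^ dexp p x" using power_increasing[of 1 "dexp p x" "real p"] dexp_pos[OF x False] p_gt_1 by (simp only: power_one_right)
      have h2: "inverse (real p ^ k) \<le> 1" using p_gt_1 by (simp add: one_le_power inverse_le_1_iff)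
      have "qp_norm p x = real p ^ dexp p x" unfolding qp_norm_def using False N by auto
      then have "\<not> qp_norm p x \<le> inverse (real p ^ k)" using h1 h2 p_gt_1 by linarith
      moreover have "x k \<noteq> 0" using Qp_zero_down[OF x, of k 0] False by auto
      ultimately show ?thesis by simp
    next
      case True
      note g = Greatest_digit_zero_iff[OF x N True, of k]
      have "qp_norm p x = inverse (real p ^ (GREATEST n. x n = 0))"
        unfolding qp_norm_def using True N by auto
      moreover have "inverse (real p ^ (GREATEST n. x n = 0)) \<le> inverse (real p ^ k) \<longleftrightarrow> k \<le> (GREATEST n. x n = 0)"
      proof -
        have "0 < real p ^ (GREATEST n. x n = 0)" "0 < real p ^ k" using p_gt_1 by auto
        then have "inverse (real p ^ (GREATEST n. x n = 0)) \<le> inverse (real p ^ k) \<longleftrightarrow> real p ^ k \<le> real p ^ (GREATEST n. x n = 0)"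
          by (rule inverse_le_iff_le)
        also have "\<dots> \<longleftrightarrow> k \<le> (GREATEST n. x n = 0)" by (rule power_increasing_iff[OF p_gt_1])
        finally show ?thesis .
      qed
      ultimately show ?thesis using g by simp
    qed
  qed
qed

lemma qp_norm_le_power_iff: "x \<in> Qp p \<Longrightarrow> qp_norm p x \<le> real p ^ d \<longleftrightarrow> x 0 * of_nat p ^ d \<in> \<int>"
proof -
  assume x: "x \<in> Qp p"
  show ?thesis
  proof (cases "\<forall>n. x n = 0")
    case True then show ?thesis unfolding qp_norm_def by simp
  next
    case False
    then obtain N where N: "x N \<noteq> 0" by auto
    show ?thesis
    proof (cases "x 0 = 0")
      case False
      have "qp_norm p x = real p ^ dexp p x" unfolding qp_norm_def using False by auto
      moreover have "real p ^ dexp p x \<le> real p ^ d \<longleftrightarrow> dexp p x \<le> d" by (rule power_increasing_iff[OF p_gt_1])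
      moreover have "dexp p x \<le> d \<longleftrightarrow> x 0 * of_nat p ^ d \<in> \<int>"
        using dexp_le[of x d] Ints_mult_ppow_mono[OF dexp_Ints[OF x], of d] by blast
      ultimately show ?thesis by simp
    next
      case True
      have "qp_norm p x = inverse (real p ^ (GREATEST n. x n = 0))"
        unfolding qp_norm_def using True N by auto
      moreover have "inverse (real p ^ (GREATEST n. x n = 0)) \<le> 1" using p_gt_1 by (simp add: one_le_power inverse_le_1_iff)
      moreover have "1 \<le> real p ^ d" using p_gt_1 by (simp add: one_le_power inverse_le_1_iff)
      ultimately show ?thesis using True by simp
    qed
  qed
qed

lemma Zp_iff: "x \<in> Zp p \<longleftrightarrow> x \<in> Qp p \<and> x 0 = 0"
proof -
  have "x \<in> Qp p \<Longrightarrow> qp_norm p x \<le> 1 \<longleftrightarrow> x 0 = 0"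
    using qp_norm_le_power_iff[of x 0] Qp_digit_0_Ints by auto
  then show ?thesis unfolding Zp_def by auto
qed

lemma qp_norm_gt_1_iff: "x \<in> Qp p \<Longrightarrow> 1 < qp_norm p x \<longleftrightarrow> x 0 \<noteq> 0"
  using qp_norm_le_power_iff[of x 0] Qp_digit_0_Ints by force

lemma pcong_0_zero_iff_Ints: "pcong p 0 q 0 \<longleftrightarrow> q \<in> \<int>" unfolding pcong_def by simp

lemma pcong_zero_subst: "pcong p n q r \<Longrightarrow> pcong p n q 0 \<longleftrightarrow> pcong p n r 0"
  using pcong_trans pcong_sym by metis

lemma pcong_mult_ppow: "pcong p n q r \<Longrightarrow> pcong p n (q * of_nat p ^ d) (r * of_nat p ^ d)"
  using pcong_mult_int[of n q r "of_nat p ^ d"] by (simp add: mult.commute Ints_power)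

lemma pcong_scale_zero_iff: "pcong p (k + e) (of_nat p ^ e * q) 0 \<longleftrightarrow> pcong p k q 0"
  unfolding pcong_def using p_power_nonzero[of e] by (simp add: power_add)

lemma qp_diff_digit_eq_0_iff: "x \<in> Qp p \<Longrightarrow> y \<in> Qp p \<Longrightarrow> qp_add p y (qp_neg p x) k = 0 \<longleftrightarrow> y k = x k"
proof -
  assume x: "x \<in> Qp p" and y: "y \<in> Qp p"
  have c1: "pcong p k (y k + rmod p k (- x k)) (y k + - x k)"
    by (intro pcong_add pcong_refl rmod_pcong)
  have "qp_add p y (qp_neg p x) k = 0 \<longleftrightarrow> pcong p k (y k + rmod p k (- x k)) 0"
    unfolding qp_add_digit qp_neg_digit using pcong_zero_iff_rmod by simp
  also have "\<dots> \<longleftrightarrow> pcong p k (y k + - x k) 0" by (rule pcong_zero_subst[OF c1])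
  also have "\<dots> \<longleftrightarrow> pcong p k (y k) (x k)" unfolding pcong_def by simp
  also have "\<dots> \<longleftrightarrow> y k = x k"
    using pcong_canonical_eq[of "y k" k "x k"] QpD[OF x, of k] QpD[OF y, of k] pcong_refl by auto
  finally show ?thesis .
qed

lemma qp_norm_diff_le_iff: "x \<in> Qp p \<Longrightarrow> y \<in> Qp p \<Longrightarrow> qp_norm p (qp_add p y (qp_neg p x)) \<le> inverse (real p ^ k) \<longleftrightarrow> y k = x k"
  using qp_norm_le_inverse_iff[OF qp_add_Qp[OF _ qp_neg_Qp]] qp_diff_digit_eq_0_iff by simp

lemma val_ge_iff_level: "x \<in> Qp p \<Longrightarrow> k \<le> M \<Longrightarrow> val_ge p x d k \<longleftrightarrow> pcong p k (x M * of_nat p ^ d) 0"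
proof -
  assume a: "x \<in> Qp p" "k \<le> M"
  have c: "pcong p k (x M * of_nat p ^ d) (x k * of_nat p ^ d)" by (rule pcong_mult_ppow[OF Qp_digit_pcong[OF a]])
  show ?thesis unfolding val_ge_def using pcong_zero_subst[OF c] by simp
qed

lemma val_ge_0_iff_digit: "x \<in> Qp p \<Longrightarrow> val_ge p x 0 k \<longleftrightarrow> x k = 0"
  unfolding val_ge_def using pcong_zero_iff_rmod rmod_id QpD by (metis mult_1_right power_0)

lemma val_ge_level_0_iff: "val_ge p x d 0 \<longleftrightarrow> x 0 * of_nat p ^ d \<in> \<int>"
  unfolding val_ge_def by (simp add: pcong_0_zero_iff_Ints)

lemma val_ge_digit_Ints: "y \<in> Qp p \<Longrightarrow> val_ge p y D 0 \<Longrightarrow> y k * of_nat p ^ D \<in> \<int>"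
  using val_ge_iff_level[of y 0 k D] pcong_0_zero_iff_Ints by simp

lemma Zp_iff_val_ge: "x \<in> Zp p \<longleftrightarrow> x \<in> Qp p \<and> val_ge p x 0 0"
  using Zp_iff val_ge_0_iff_digit by blast

lemma val_ge_shift_iff: "x \<in> Qp p \<Longrightarrow> val_ge p x (d + e) (k + e) \<longleftrightarrow> val_ge p x d k"
proof -
  assume x: "x \<in> Qp p"
  have "val_ge p x (d + e) (k + e) \<longleftrightarrow> pcong p (k + e) (of_nat p ^ e * (x (k + e) * of_nat p ^ d)) 0"
    unfolding val_ge_def by (simp add: power_add algebra_simps)
  also have "\<dots> \<longleftrightarrow> pcong p k (x (k + e) * of_nat p ^ d) 0" by (rule pcong_scale_zero_iff)
  also have "\<dots> \<longleftrightarrow> val_ge p x d k" using val_ge_iff_level[OF x, of k "k + e" d] by simp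
  finally show ?thesis .
qed

lemma val_ge_mono_exp: "val_ge p x d k \<Longrightarrow> d \<le> d' \<Longrightarrow> val_ge p x d' k"
proof -
  assume a: "val_ge p x d k" "d \<le> d'"
  then obtain e where e: "d' = d + e" using le_Suc_ex by blast
  have "pcong p k (x k * of_nat p ^ d * of_nat p ^ e) (0 * of_nat p ^ e)"
    using pcong_mult_ppow a(1) unfolding val_ge_def by blast
  then show ?thesis unfolding val_ge_def e by (simp add: power_add mult.assoc)
qed

lemma val_ge_dexp: "x \<in> Qp p \<Longrightarrow> val_ge p x (dexp p x) 0"
  using val_ge_level_0_iff dexp_Ints by blast

lemma val_ge_qp_zero: "val_ge p qp_zero d k"
  unfolding val_ge_def qp_zero_def pcong_def by simp

lemma val_ge_add: "x \<in> Qp p \<Longrightarrow> y \<in> Qp p \<Longrightarrow> val_ge p x d k \<Longrightarrow> val_ge p y d k \<Longrightarrow> val_ge p (qp_add p x y) d k"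
proof -
  assume a: "x \<in> Qp p" "y \<in> Qp p" "val_ge p x d k" "val_ge p y d k"
  have "pcong p k (x k * of_nat p ^ d + y k * of_nat p ^ d) (0 + 0)"
    using a(3,4) unfolding val_ge_def by (rule pcong_add)
  then have c2: "pcong p k ((x k + y k) * of_nat p ^ d) 0" by (simp add: algebra_simps)
  have c1: "pcong p k (qp_add p x y k * of_nat p ^ d) ((x k + y k) * of_nat p ^ d)"
    unfolding qp_add_digit by (intro pcong_mult_ppow rmod_pcong)
  show ?thesis unfolding val_ge_def using pcong_trans[OF c1 c2] .
qed

lemma dexp_Zp: "a \<in> Zp p \<Longrightarrow> dexp p a = 0"
  using dexp_le[of a 0] Zp_iff by simp

lemma Zp_digit_Ints: "a \<in> Zp p \<Longrightarrow> a m \<in> \<int>"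
  using digit_mult_ppow_Ints[of a 0 m] Zp_iff dexp_Zp by auto

lemma val_ge_Zp_mult: "a \<in> Zp p \<Longrightarrow> y \<in> Qp p \<Longrightarrow> val_ge p y d k \<Longrightarrow> val_ge p (qp_mult p a y) d k"
proof -
  assume a: "a \<in> Zp p" "y \<in> Qp p" "val_ge p y d k"
  have aQ: "a \<in> Qp p" using a(1) Zp_iff by blast
  define m where "m = k + dexp p a + dexp p y"
  have e: "qp_mult p a y k = rmod p k (a m * y m)" unfolding qp_mult_def Let_def m_def ..
  have "pcong p k (y m * of_nat p ^ d) 0" using val_ge_iff_level[OF a(2), of k m d] a(3) unfolding m_def by simp
  then have "pcong p k (a m * (y m * of_nat p ^ d)) (a m * 0)"
    using Zp_digit_Ints[OF a(1)] by (rule pcong_mult_int)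
  then have c2: "pcong p k ((a m * y m) * of_nat p ^ d) 0" by (simp add: mult.assoc)
  have c1: "pcong p k (qp_mult p a y k * of_nat p ^ d) ((a m * y m) * of_nat p ^ d)"
    unfolding e by (intro pcong_mult_ppow rmod_pcong)
  show ?thesis unfolding val_ge_def using pcong_trans[OF c1 c2] .
qed

lemma qp_add_Zp: "x \<in> Zp p \<Longrightarrow> y \<in> Zp p \<Longrightarrow> qp_add p x y \<in> Zp p"
  using Zp_iff qp_add_Qp unfolding qp_add_def by simp

lemma qp_neg_Zp: "x \<in> Zp p \<Longrightarrow> qp_neg p x \<in> Zp p"
  using Zp_iff qp_neg_Qp unfolding qp_neg_def by simp

lemma Zp_mult_Zp: "a \<in> Zp p \<Longrightarrow> y \<in> Zp p \<Longrightarrow> qp_mult p a y \<in> Zp p"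
  using val_ge_Zp_mult[of a y 0 0] Zp_iff_val_ge qp_mult_Qp Zp_iff by blast

lemma qp_add_zero_right: "x \<in> Qp p \<Longrightarrow> qp_add p x qp_zero = x"
  unfolding qp_add_def qp_zero_def using rmod_id QpD by (auto intro!: ext)

lemma qp_add_zero_left: "x \<in> Qp p \<Longrightarrow> qp_add p qp_zero x = x"
  unfolding qp_add_def qp_zero_def using rmod_id QpD by (auto intro!: ext)

lemma qp_mult_zero_right: "qp_mult p x qp_zero = qp_zero"
  unfolding qp_mult_def qp_zero_def Let_def by (auto intro!: ext)

lemma qp_mult_zero_left: "qp_mult p qp_zero x = qp_zero"
  unfolding qp_mult_def qp_zero_def Let_def by (auto intro!: ext)

lemma qp_mult_one_right: "x \<in> Qp p \<Longrightarrow> qp_mult p x (qp_one p) = x"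
proof (rule ext)
  fix n assume x: "x \<in> Qp p"
  define M where "M = n + dexp p x + dexp p (qp_one p)"
  have "qp_mult p x (qp_one p) n = rmod p n (x M * 1)"
    by (rule qp_mult_digit[OF x qp_one_Qp]) (auto simp: M_def pcong_refl qp_one_def pcong_sym[OF rmod_pcong])
  then show "qp_mult p x (qp_one p) n = x n" using rmod_Qp_digit[OF x] M_def by simp
qed

lemma qp_mult_distrib:
  assumes a: "a \<in> Qp p" and x: "x \<in> Qp p" and y: "y \<in> Qp p"
  shows "qp_mult p a (qp_add p x y) = qp_add p (qp_mult p a x) (qp_mult p a y)"
proof (rule ext)
  fix n
  have xy: "qp_add p x y \<in> Qp p" using qp_add_Qp[OF x y] .
  define M where "M = n + dexp p a + dexp p x + dexp p y + dexp p (qp_add p x y)"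
  have c: "pcong p M (x M + y M) (qp_add p x y M)"
    unfolding qp_add_def by (rule pcong_sym[OF rmod_pcong])
  have l: "qp_mult p a (qp_add p x y) n = rmod p n (a M * (x M + y M))"
    by (rule qp_mult_digit[OF a xy _ pcong_refl c]) (simp add: M_def)
  have r1: "qp_mult p a x n = rmod p n (a M * x M)"
    by (rule qp_mult_digit_at[OF a x]) (simp add: M_def)
  have r2: "qp_mult p a y n = rmod p n (a M * y M)"
    by (rule qp_mult_digit_at[OF a y]) (simp add: M_def)
  have "pcong p n (rmod p n (a M * x M) + rmod p n (a M * y M)) (a M * x M + a M * y M)"
    by (intro pcong_add rmod_pcong)
  then have "rmod p n (rmod p n (a M * x M) + rmod p n (a M * y M)) = rmod p n (a M * (x M + y M))"
    using rmod_eq_iff_pcong by (simp add: algebra_simps)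
  then show "qp_mult p a (qp_add p x y) n = qp_add p (qp_mult p a x) (qp_mult p a y) n"
    unfolding l qp_add_digit r1 r2 by simp
qed

lemma qp_mult_neg:
  assumes a: "a \<in> Qp p" and x: "x \<in> Qp p"
  shows "qp_mult p a (qp_neg p x) = qp_neg p (qp_mult p a x)"
proof (rule ext)
  fix n
  have nx: "qp_neg p x \<in> Qp p" using qp_neg_Qp[OF x] .
  define M where "M = n + dexp p a + dexp p x + dexp p (qp_neg p x)"
  have c: "pcong p M (- x M) (qp_neg p x M)"
    unfolding qp_neg_def by (rule pcong_sym[OF rmod_pcong])
  have l: "qp_mult p a (qp_neg p x) n = rmod p n (a M * (- x M))"
    by (rule qp_mult_digit[OF a nx _ pcong_refl c]) (simp add: M_def)
  have r1: "qp_mult p a x n = rmod p n (a M * x M)"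
    by (rule qp_mult_digit_at[OF a x]) (simp add: M_def)
  have "pcong p n (- rmod p n (a M * x M)) (- (a M * x M))"
    by (intro pcong_neg rmod_pcong)
  then have "rmod p n (- rmod p n (a M * x M)) = rmod p n (a M * (- x M))"
    using rmod_eq_iff_pcong by (simp add: algebra_simps)
  then show "qp_mult p a (qp_neg p x) n = qp_neg p (qp_mult p a x) n"
    unfolding l qp_neg_digit r1 by simp
qed

lemma qp_mult_lcomm:
  assumes a: "a \<in> Qp p" and b: "b \<in> Qp p" and x: "x \<in> Qp p"
  shows "qp_mult p a (qp_mult p b x) = qp_mult p b (qp_mult p a x)"
proof (rule ext)
  fix n
  have bx: "qp_mult p b x \<in> Qp p" using qp_mult_Qp[OF b x] .
  have ax: "qp_mult p a x \<in> Qp p" using qp_mult_Qp[OF a x] .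
  define M where "M = n + dexp p a + dexp p b + dexp p (qp_mult p b x) + dexp p (qp_mult p a x)"
  define M' where "M' = M + dexp p a + dexp p b + dexp p x"
  have cb: "pcong p M (b M' * x M') (qp_mult p b x M)"
  proof -
    have "qp_mult p b x M = rmod p M (b M' * x M')" by (rule qp_mult_digit_at[OF b x]) (simp add: M'_def)
    then show ?thesis using pcong_sym[OF rmod_pcong] by metis
  qed
  have ca: "pcong p M (a M' * x M') (qp_mult p a x M)"
  proof -
    have "qp_mult p a x M = rmod p M (a M' * x M')" by (rule qp_mult_digit_at[OF a x]) (simp add: M'_def)
    then show ?thesis using pcong_sym[OF rmod_pcong] by metis
  qed
  have a': "pcong p M (a M') (a M)" by (rule Qp_digit_pcong[OF a]) (simp add: M'_def)
  have b': "pcong p M (b M') (b M)" by (rule Qp_digit_pcong[OF b]) (simp add: M'_def)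
  have "qp_mult p a (qp_mult p b x) n = rmod p n (a M' * (b M' * x M'))"
    by (rule qp_mult_digit[OF a bx _ a' cb]) (simp add: M_def)
  moreover have "qp_mult p b (qp_mult p a x) n = rmod p n (b M' * (a M' * x M'))"
    by (rule qp_mult_digit[OF b ax _ b' ca]) (simp add: M_def)
  ultimately show "qp_mult p a (qp_mult p b x) n = qp_mult p b (qp_mult p a x) n"
    by (simp add: algebra_simps)
qed

lemma qp_add_swap: "qp_add p (qp_add p a b) (qp_add p c d) = qp_add p (qp_add p a c) (qp_add p b d)"
proof (rule ext)
  fix n
  have "pcong p n (rmod p n (a n + b n) + rmod p n (c n + d n)) ((a n + b n) + (c n + d n))"
    by (intro pcong_add rmod_pcong)
  moreover have "pcong p n (rmod p n (a n + c n) + rmod p n (b n + d n)) ((a n + c n) + (b n + d n))"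
    by (intro pcong_add rmod_pcong)
  ultimately have "pcong p n (rmod p n (a n + b n) + rmod p n (c n + d n)) (rmod p n (a n + c n) + rmod p n (b n + d n))"
    using pcong_trans pcong_sym by (metis add.assoc add.left_commute)
  then show "qp_add p (qp_add p a b) (qp_add p c d) n = qp_add p (qp_add p a c) (qp_add p b d) n"
    unfolding qp_add_def using rmod_eq_iff_pcong by blast
qed

lemma qp_neg_add: "qp_neg p (qp_add p x y) = qp_add p (qp_neg p x) (qp_neg p y)"
proof (rule ext)
  fix n
  have "pcong p n (- rmod p n (x n + y n)) (- (x n + y n))"
    by (intro pcong_neg rmod_pcong)
  moreover have "pcong p n (rmod p n (- x n) + rmod p n (- y n)) (- x n + - y n)"
    by (intro pcong_add rmod_pcong)
  ultimately have "pcong p n (- rmod p n (x n + y n)) (rmod p n (- x n) + rmod p n (- y n))"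
    using pcong_trans pcong_sym by (metis minus_add_distrib)
  then show "qp_neg p (qp_add p x y) n = qp_add p (qp_neg p x) (qp_neg p y) n"
    unfolding qp_add_def qp_neg_def using rmod_eq_iff_pcong by blast
qed

lemma qp_add_self_zero: "y \<in> Qp p \<Longrightarrow> qp_add p y y = y \<Longrightarrow> y = qp_zero"
proof (rule ext)
  fix n assume y: "y \<in> Qp p" and e: "qp_add p y y = y"
  have "rmod p n (y n + y n) = y n" using fun_cong[OF e, of n] unfolding qp_add_def .
  then have "pcong p n (y n) (y n + y n)" using rmod_pcong[of n "y n + y n"] by simp
  then have "pcong p n (y n + y n) (y n)" using pcong_sym by blast
  then have "pcong p n (y n + y n + - y n) (y n + - y n)"
    using pcong_add[OF _ pcong_refl[of n "- y n"]] by blast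
  moreover have "y n + y n + - y n = y n" "y n + - y n = 0" by simp_all
  ultimately have "pcong p n (y n) 0" by simp
  then have "rmod p n (y n) = 0" using pcong_zero_iff_rmod by blast
  then show "y n = qp_zero n" using rmod_id QpD[OF y, of n] unfolding qp_zero_def by simp
qed

lemma qp_ppow_Qp: "qp_ppow p e \<in> Qp p"
  unfolding qp_ppow_def by (rule QpI) (simp add: Zinv_rmod Zinv_pow rmod_ge rmod_less rmod_rmod)

lemma qp_pinv_Qp: "qp_pinv p e \<in> Qp p"
  unfolding qp_pinv_def by (rule QpI) (simp add: Zinv_rmod Zinv_inv_pow rmod_ge rmod_less rmod_rmod)

lemma qp_ppow_Zp: "qp_ppow p e \<in> Zp p"
  using Zp_iff qp_ppow_Qp unfolding qp_ppow_def by (simp add: rmod_0_Ints Ints_power)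

lemma val_ge_qp_pinv: "val_ge p (qp_pinv p k) k 0"
proof -
  have "qp_pinv p k 0 * of_nat p ^ k = 1 - of_int \<lfloor>1 / (of_nat p::rat) ^ k\<rfloor> * of_nat p ^ k"
    unfolding qp_pinv_def rmod_def using p_power_nonzero[of k] by (simp add: algebra_simps)
  then show ?thesis unfolding val_ge_level_0_iff by (simp add: Ints_diff Ints_mult Ints_power)
qed

lemma qp_ppow_pinv: "qp_mult p (qp_ppow p k) (qp_pinv p k) = qp_one p"
proof (rule ext)
  fix n
  define M where "M = n + dexp p (qp_ppow p k) + dexp p (qp_pinv p k)"
  have "qp_mult p (qp_ppow p k) (qp_pinv p k) n = rmod p n (of_nat p ^ k * (1 / of_nat p ^ k))"
    by (rule qp_mult_digit[OF qp_ppow_Qp[of k] qp_pinv_Qp[of k], of n M])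
       (auto simp: M_def qp_ppow_def qp_pinv_def pcong_sym[OF rmod_pcong])
  then show "qp_mult p (qp_ppow p k) (qp_pinv p k) n = qp_one p n"
    unfolding qp_one_def using p_power_nonzero[of k] p_ge_2 by simp
qed

lemma qp_ppow_pinv_mult: "y \<in> Qp p \<Longrightarrow> qp_mult p (qp_ppow p k) (qp_mult p (qp_pinv p k) y) = y"
proof (rule ext)
  fix n assume y: "y \<in> Qp p"
  define w where "w = qp_mult p (qp_pinv p k) y"
  have w: "w \<in> Qp p" unfolding w_def by (rule qp_mult_Qp[OF qp_pinv_Qp y])
  define M where "M = n + dexp p (qp_ppow p k) + dexp p w"
  define M' where "M' = M + dexp p (qp_pinv p k) + dexp p y"
  have wM: "w M = rmod p M (1 / of_nat p ^ k * y M')"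
    unfolding w_def
    by (rule qp_mult_digit[OF qp_pinv_Qp[of k] y, of M M'])
       (auto simp: M'_def qp_pinv_def pcong_sym[OF rmod_pcong] pcong_refl)
  have wc: "pcong p M (1 / of_nat p ^ k * y M') (w M)" unfolding wM by (rule pcong_sym[OF rmod_pcong])
  have "qp_mult p (qp_ppow p k) w n = rmod p n (of_nat p ^ k * (1 / of_nat p ^ k * y M'))"
    by (rule qp_mult_digit[OF qp_ppow_Qp[of k] w, of n M, OF _ _ wc])
       (auto simp: M_def qp_ppow_def pcong_sym[OF rmod_pcong])
  also have "\<dots> = rmod p n (y M')" using p_power_nonzero[of k] by simp
  also have "\<dots> = y n" using rmod_Qp_digit[OF y] M'_def M_def by simp
  finally show "qp_mult p (qp_ppow p k) (qp_mult p (qp_pinv p k) y) n = y n" unfolding w_def .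
qed

lemma val_ge_qp_ppow_mult_shift_iff:
  assumes w: "w \<in> Qp p"
  shows "val_ge p (qp_mult p (qp_ppow p e) w) d (k + e) \<longleftrightarrow> val_ge p w d k"
proof -
  define M where "M = k + e + dexp p (qp_ppow p e) + dexp p w"
  have dig: "qp_mult p (qp_ppow p e) w (k + e) = rmod p (k + e) (of_nat p ^ e * w M)"
    by (rule qp_mult_digit[OF qp_ppow_Qp[of e] w, of "k + e" M])
       (auto simp: M_def qp_ppow_def pcong_sym[OF rmod_pcong] pcong_refl)
  have "val_ge p (qp_mult p (qp_ppow p e) w) d (k + e) \<longleftrightarrow> pcong p (k + e) (of_nat p ^ e * w M * of_nat p ^ d) 0"
    unfolding val_ge_def dig by (rule pcong_zero_subst[OF pcong_mult_ppow[OF rmod_pcong]])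
  also have "\<dots> \<longleftrightarrow> pcong p (k + e) (of_nat p ^ e * (w M * of_nat p ^ d)) 0" by (simp add: mult.assoc)
  also have "\<dots> \<longleftrightarrow> pcong p k (w M * of_nat p ^ d) 0" by (rule pcong_scale_zero_iff)
  also have "\<dots> \<longleftrightarrow> val_ge p w d k" using val_ge_iff_level[OF w, of k M d] M_def by simp
  finally show ?thesis .
qed

lemma val_ge_qp_ppow_mult_iff:
  assumes x: "x \<in> Qp p"
  shows "val_ge p (qp_mult p (qp_ppow p d) x) d' k \<longleftrightarrow> val_ge p x (d' + d) k"
  using val_ge_shift_iff[OF qp_mult_Qp[OF qp_ppow_Qp[of d] x], of d' d k]
    val_ge_qp_ppow_mult_shift_iff[OF x, of d "d' + d" k] by simp

lemma qp_ppow_mult_Zp: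
  assumes x: "x \<in> Qp p" and b: "val_ge p x d 0"
  shows "qp_mult p (qp_ppow p d) x \<in> Zp p"
  using val_ge_qp_ppow_mult_iff[OF x, of d 0 0] Zp_iff_val_ge qp_mult_Qp[OF qp_ppow_Qp x] b by simp

lemma qp_pinv_mult_digit_0: "y \<in> Qp p \<Longrightarrow> qp_mult p (qp_pinv p k) y 0 = 0 \<longleftrightarrow> y k = 0"
proof -
  assume y: "y \<in> Qp p"
  define w where "w = qp_mult p (qp_pinv p k) y"
  have w: "w \<in> Qp p" unfolding w_def by (rule qp_mult_Qp[OF qp_pinv_Qp y])
  have yw: "y = qp_mult p (qp_ppow p k) w" unfolding w_def using qp_ppow_pinv_mult[OF y] by simp
  have "y k = 0 \<longleftrightarrow> val_ge p y 0 (0 + k)" using val_ge_0_iff_digit[OF y] by simp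
  also have "\<dots> \<longleftrightarrow> val_ge p w 0 0" unfolding yw by (rule val_ge_qp_ppow_mult_shift_iff[OF w])
  also have "\<dots> \<longleftrightarrow> w 0 = 0" by (rule val_ge_0_iff_digit[OF w])
  finally show ?thesis unfolding w_def by simp
qed

end

section \<open>Digit cylinders and the topologies on \<open>Q\<^sub>p(\<nat>)\<close>\<close>

text \<open>For \<open>c \<in> cyl p c F k\<close> these sets form a neighbourhood base of \<open>c\<close> in \<open>\<tau>\<close>.\<close>
definition cyl :: "nat \<Rightarrow> qpseq \<Rightarrow> nat set \<Rightarrow> nat \<Rightarrow> qpseq set" where
  "cyl p c F k = {\<eta> \<in> QN p. (\<forall>i\<in>F. \<eta> i k = c i k) \<and> (\<forall>i. i \<notin> F \<longrightarrow> \<eta> i 0 = 0)}"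

abbreviation prod_top :: "nat \<Rightarrow> qpseq topology" where
  "prod_top q \<equiv> product_topology (\<lambda>_. qp_top q) UNIV"

context padic
begin

lemma openin_qp_top:
  "openin (qp_top p) U \<longleftrightarrow> U \<subseteq> Qp p \<and> (\<forall>x\<in>U. \<exists>k. \<forall>y\<in>Qp p. y k = x k \<longrightarrow> y \<in> U)"
  unfolding qp_top_def
  by (intro openin_ball_topology_iff[where r = "\<lambda>k. inverse (real p ^ k)" and R = "\<lambda>k x y. y k = x k"]
      inverse_power_pos inverse_power_less qp_norm_diff_le_iff)

lemma topspace_qp_top: "topspace (qp_top p) = Qp p"
  unfolding qp_top_def by (rule topspace_ball_topology)

lemma topspace_prod_top: "topspace (prod_top p) = {f. \<forall>i. f i \<in> Qp p}"
  by (auto simp: topspace_qp_top PiE_def extensional_def)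

lemma openin_prod_top_digit_cylinder:
  assumes F: "finite F"
  shows "openin (prod_top p) {\<eta> \<in> topspace (prod_top p). \<forall>i\<in>F. \<eta> i (lv i) = v i}"
proof -
  define S where "S i = {y \<in> Qp p. i \<in> F \<longrightarrow> y (lv i) = v i}" for i
  have "{\<eta> \<in> topspace (prod_top p). \<forall>i\<in>F. \<eta> i (lv i) = v i} = Pi\<^sub>E UNIV S"
    unfolding S_def topspace_prod_top by (auto simp: PiE_iff)
  moreover have "openin (qp_top p) (S i)" for i
    unfolding S_def openin_qp_top by (auto intro!: exI[of _ "lv i"])
  moreover have "finite {i \<in> UNIV. S i \<noteq> topspace (qp_top p)}"
    using F by (rule finite_subset[rotated]) (auto simp: S_def topspace_qp_top)
  ultimately show ?thesis by (simp add: openin_PiE_gen)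
qed

lemma QN_iff: "\<xi> \<in> QN p \<longleftrightarrow> (\<forall>i. \<xi> i \<in> Qp p) \<and> finite {i. \<xi> i 0 \<noteq> 0}"
proof -
  have "(\<forall>i. \<xi> i \<in> Qp p) \<Longrightarrow> {i. qp_norm p (\<xi> i) > 1} = {i. \<xi> i 0 \<noteq> 0}"
    using qp_norm_gt_1_iff by blast
  then show ?thesis unfolding QN_def by auto
qed

lemma QN_Qp: "\<xi> \<in> QN p \<Longrightarrow> \<xi> i \<in> Qp p" using QN_iff by blast

lemma XP_iff: "\<xi> \<in> XP p P \<longleftrightarrow> (\<forall>i. \<xi> i \<in> Qp p) \<and> (\<forall>j. j \<notin> P \<longrightarrow> \<xi> j 0 = 0)"
  unfolding XP_def using Zp_iff by auto

lemma XP_QN: "finite P \<Longrightarrow> XP p P \<subseteq> QN p"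
proof
  fix \<xi> assume P: "finite P" and x: "\<xi> \<in> XP p P"
  have "{i. \<xi> i 0 \<noteq> 0} \<subseteq> P" using x XP_iff by blast
  then show "\<xi> \<in> QN p" using QN_iff x XP_iff P finite_subset by metis
qed

lemma istopology_tau: "istopology (\<lambda>U. U \<subseteq> QN p \<and> (\<forall>P. finite P \<longrightarrow>
      openin (subtopology (prod_top p) (XP p P)) (U \<inter> XP p P)))"
  unfolding istopology_def
proof (rule conjI; intro allI impI)
  fix S T assume a: "S \<subseteq> QN p \<and> (\<forall>P. finite P \<longrightarrow> openin (subtopology (prod_top p) (XP p P)) (S \<inter> XP p P))"
    and b: "T \<subseteq> QN p \<and> (\<forall>P. finite P \<longrightarrow> openin (subtopology (prod_top p) (XP p P)) (T \<inter> XP p P))"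
  show "S \<inter> T \<subseteq> QN p \<and> (\<forall>P. finite P \<longrightarrow> openin (subtopology (prod_top p) (XP p P)) (S \<inter> T \<inter> XP p P))"
  proof (intro conjI allI impI)
    show "S \<inter> T \<subseteq> QN p" using a by blast
    fix P :: "nat set" assume P: "finite P"
    have "S \<inter> T \<inter> XP p P = (S \<inter> XP p P) \<inter> (T \<inter> XP p P)" by blast
    then show "openin (subtopology (prod_top p) (XP p P)) (S \<inter> T \<inter> XP p P)"
      using a b P by (simp add: openin_Int)
  qed
next
  fix K assume a: "\<forall>U\<in>K. U \<subseteq> QN p \<and> (\<forall>P. finite P \<longrightarrow> openin (subtopology (prod_top p) (XP p P)) (U \<inter> XP p P))"
  show "\<Union>K \<subseteq> QN p \<and> (\<forall>P. finite P \<longrightarrow> openin (subtopology (prod_top p) (XP p P)) (\<Union>K \<inter> XP p P))"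
  proof (intro conjI allI impI)
    show "\<Union>K \<subseteq> QN p" using a by blast
    fix P :: "nat set" assume P: "finite P"
    have e: "\<Union>K \<inter> XP p P = \<Union>((\<lambda>U. U \<inter> XP p P) ` K)" by blast
    have "openin (subtopology (prod_top p) (XP p P)) (\<Union>((\<lambda>U. U \<inter> XP p P) ` K))"
      by (rule openin_Union) (use a P in blast)
    then show "openin (subtopology (prod_top p) (XP p P)) (\<Union>K \<inter> XP p P)" unfolding e .
  qed
qed

lemma openin_tau: "openin (tau p) U \<longleftrightarrow> U \<subseteq> QN p \<and> (\<forall>P. finite P \<longrightarrow>
      openin (subtopology (prod_top p) (XP p P)) (U \<inter> XP p P))"
  unfolding tau_def using topology_inverse'[OF istopology_tau] by simp

lemma cyl_QN: "cyl p c F k \<subseteq> QN p" unfolding cyl_def by blast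

lemma prod_top_openD:
  assumes V: "openin (prod_top p) V" and c: "c \<in> V"
  shows "\<exists>I k. finite I \<and> (\<forall>\<eta>. (\<forall>i. \<eta> i \<in> Qp p) \<longrightarrow> (\<forall>i\<in>I. \<eta> i k = c i k) \<longrightarrow> \<eta> \<in> V)"
proof -
  obtain U where U: "finite {i \<in> UNIV. U i \<noteq> topspace (qp_top p)}" "\<forall>i\<in>UNIV. openin (qp_top p) (U i)"
    "c \<in> Pi\<^sub>E UNIV U" "Pi\<^sub>E UNIV U \<subseteq> V"
    using V c unfolding openin_product_topology_alt by blast
  define I where "I = {i. U i \<noteq> Qp p}"
  have I: "finite I" using U(1) unfolding I_def topspace_qp_top by simp
  have "\<forall>i\<in>I. \<exists>k. \<forall>y\<in>Qp p. y k = c i k \<longrightarrow> y \<in> U i"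
    using U(2,3) unfolding openin_qp_top by (auto simp: PiE_iff)
  then obtain kf where kf: "\<forall>i\<in>I. \<forall>y\<in>Qp p. y (kf i) = c i (kf i) \<longrightarrow> y \<in> U i"
    by (rule bchoice[THEN exE])
  define k where "k = (\<Sum>i\<in>I. kf i)"
  have kf_le: "i \<in> I \<Longrightarrow> kf i \<le> k" for i unfolding k_def using I by (intro member_le_sum) auto
  have cQ: "c i \<in> Qp p" for i using openin_subset[OF V] c topspace_prod_top by blast
  have "\<eta> \<in> V" if \<eta>: "\<forall>i. \<eta> i \<in> Qp p" and agree: "\<forall>i\<in>I. \<eta> i k = c i k" for \<eta>
  proof -
    have "\<eta> i \<in> U i" for i
    proof (cases "i \<in> I")
      case True
      then have "\<eta> i (kf i) = c i (kf i)"
        using Qp_digit_eq_mono[OF _ cQ, of "\<eta> i" "kf i" k] \<eta> agree kf_le by blast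
      then show ?thesis using kf True \<eta> by blast
    next
      case False then show ?thesis unfolding I_def using \<eta> by blast
    qed
    then show ?thesis using U(4) by (auto simp: PiE_iff)
  qed
  then show ?thesis using I by blast
qed

lemma tau_openD:
  assumes W: "openin (tau p) W" and c: "c \<in> W"
  shows "\<exists>F k. finite F \<and> c \<in> cyl p c F k \<and> cyl p c F k \<subseteq> W"
proof -
  have cQ: "c \<in> QN p" using W c openin_tau by blast
  define P where "P = {i. c i 0 \<noteq> 0}"
  have P: "finite P" using cQ QN_iff P_def by blast
  have cX: "c \<in> XP p P" using cQ QN_iff XP_iff P_def by auto
  have "openin (subtopology (prod_top p) (XP p P)) (W \<inter> XP p P)" using W P openin_tau by blast
  then obtain V where V: "openin (prod_top p) V" "W \<inter> XP p P = V \<inter> XP p P"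
    unfolding openin_subtopology by blast
  have "c \<in> V" using V(2) c cX by blast
  then obtain I k where I: "finite I"
    and IV: "\<And>\<eta>. \<forall>i. \<eta> i \<in> Qp p \<Longrightarrow> \<forall>i\<in>I. \<eta> i k = c i k \<Longrightarrow> \<eta> \<in> V"
    using prod_top_openD[OF V(1)] by blast
  have "\<eta> \<in> W" if \<eta>: "\<eta> \<in> cyl p c (P \<union> I) k" for \<eta>
  proof -
    have \<eta>Q: "\<forall>i. \<eta> i \<in> Qp p" using \<eta> cyl_QN QN_Qp by blast
    have agree: "\<forall>i\<in>P \<union> I. \<eta> i k = c i k" using \<eta> unfolding cyl_def by blast
    have "\<eta> j 0 = 0" if j: "j \<notin> P" for j
    proof (cases "j \<in> I")
      case True
      then have "\<eta> j 0 = c j 0" using Qp_digit_eq_mono[OF _ QN_Qp[OF cQ], of "\<eta> j" 0 k] \<eta>Q agree by simp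
      then show ?thesis using j P_def by simp
    next
      case False then show ?thesis using \<eta> j unfolding cyl_def by blast
    qed
    then have "\<eta> \<in> XP p P" unfolding XP_iff using \<eta>Q by blast
    moreover have "\<eta> \<in> V" using IV \<eta>Q agree by blast
    ultimately show ?thesis using V(2) by blast
  qed
  moreover have "c \<in> cyl p c (P \<union> I) k" unfolding cyl_def using cQ P_def by auto
  ultimately show ?thesis using P I by blast
qed

lemma openin_cyl_XP:
  assumes F: "finite F" and P: "finite P" and c: "c \<in> cyl p c F k"
  shows "openin (subtopology (prod_top p) (XP p P)) (cyl p c F k \<inter> XP p P)"
proof -
  define lv where "lv i = (if i \<in> F then k else 0)" for i
  define V where "V = {\<zeta> \<in> topspace (prod_top p). \<forall>i\<in>F \<union> P. \<zeta> i (lv i) = c i (lv i)}"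
  have "openin (prod_top p) V" unfolding V_def using F P by (intro openin_prod_top_digit_cylinder) auto
  moreover have "cyl p c F k \<inter> XP p P = V \<inter> XP p P"
  proof (intro equalityI subsetI)
    fix \<zeta> assume \<zeta>: "\<zeta> \<in> cyl p c F k \<inter> XP p P"
    then have "\<zeta> i (lv i) = c i (lv i)" if "i \<in> F \<union> P" for i
      using c that unfolding cyl_def lv_def by auto
    then show "\<zeta> \<in> V \<inter> XP p P" using \<zeta> by (auto simp: V_def topspace_qp_top XP_iff)
  next
    fix \<zeta> assume \<zeta>: "\<zeta> \<in> V \<inter> XP p P"
    then have agree: "\<zeta> i (lv i) = c i (lv i)" if "i \<in> F \<union> P" for i
      using that unfolding V_def by blast
    have "\<zeta> i 0 = 0" if i: "i \<notin> F" for i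
    proof (cases "i \<in> P")
      case True
      then have "\<zeta> i 0 = c i 0" using agree[of i] i unfolding lv_def by simp
      then show ?thesis using c i unfolding cyl_def by auto
    next
      case False
      then show ?thesis using \<zeta> XP_iff by blast
    qed
    moreover have "\<zeta> i k = c i k" if "i \<in> F" for i using agree[of i] that unfolding lv_def by simp
    ultimately show "\<zeta> \<in> cyl p c F k \<inter> XP p P" using \<zeta> XP_QN[OF P] unfolding cyl_def by blast
  qed
  ultimately show ?thesis unfolding openin_subtopology by blast
qed

lemma tau_openI:
  assumes WQ: "W \<subseteq> QN p" and loc: "\<forall>c\<in>W. \<exists>F k. finite F \<and> c \<in> cyl p c F k \<and> cyl p c F k \<subseteq> W"
  shows "openin (tau p) W"
  unfolding openin_tau
proof (intro conjI allI impI)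
  show "W \<subseteq> QN p" by (rule WQ)
  fix P :: "nat set" assume P: "finite P"
  show "openin (subtopology (prod_top p) (XP p P)) (W \<inter> XP p P)"
    unfolding openin_subopen[of _ "W \<inter> XP p P"]
  proof
    fix \<eta> assume \<eta>: "\<eta> \<in> W \<inter> XP p P"
    then obtain F k where F: "finite F" "\<eta> \<in> cyl p \<eta> F k" "cyl p \<eta> F k \<subseteq> W" using loc by blast
    show "\<exists>T. openin (subtopology (prod_top p) (XP p P)) T \<and> \<eta> \<in> T \<and> T \<subseteq> W \<inter> XP p P"
      using openin_cyl_XP[OF F(1) P F(2)] F(2,3) \<eta> by (intro exI[of _ "cyl p \<eta> F k \<inter> XP p P"]) blast
  qed
qed

lemma cyl_center: "c \<in> cyl p c F k \<longleftrightarrow> c \<in> QN p \<and> (\<forall>i. i \<notin> F \<longrightarrow> c i 0 = 0)"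
  unfolding cyl_def by auto

lemma cyl_same: "\<eta> \<in> cyl p c F k \<Longrightarrow> cyl p \<eta> F k = cyl p c F k"
  unfolding cyl_def by auto

lemma cyl_open: "finite F \<Longrightarrow> c \<in> cyl p c F k \<Longrightarrow> openin (tau p) (cyl p c F k)"
proof (rule tau_openI)
  assume F: "finite F" and c: "c \<in> cyl p c F k"
  show "cyl p c F k \<subseteq> QN p" by (rule cyl_QN)
  show "\<forall>ca\<in>cyl p c F k. \<exists>F' k'. finite F' \<and> ca \<in> cyl p ca F' k' \<and> cyl p ca F' k' \<subseteq> cyl p c F k"
  proof
    fix \<eta> assume e: "\<eta> \<in> cyl p c F k"
    then have "cyl p \<eta> F k = cyl p c F k" by (rule cyl_same)
    then show "\<exists>F' k'. finite F' \<and> \<eta> \<in> cyl p \<eta> F' k' \<and> cyl p \<eta> F' k' \<subseteq> cyl p c F k"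
      using F e by (intro exI[of _ F] exI[of _ k]) simp
  qed
qed

lemma cyl_mono:
  assumes c: "c \<in> cyl p c F k" and FG: "F \<subseteq> G" and kk: "k \<le> k'"
  shows "cyl p c G k' \<subseteq> cyl p c F k"
proof
  fix \<eta> assume e: "\<eta> \<in> cyl p c G k'"
  have cQ: "c \<in> QN p" using c cyl_center by blast
  have eQ: "\<eta> \<in> QN p" using e unfolding cyl_def by blast
  show "\<eta> \<in> cyl p c F k"
    unfolding cyl_def
  proof (intro CollectI conjI ballI allI impI)
    show "\<eta> \<in> QN p" by (rule eQ)
    fix i
    show "\<eta> i k = c i k" if i: "i \<in> F"
    proof -
      have "\<eta> i k' = c i k'" using e i FG unfolding cyl_def by blast
      then show ?thesis using Qp_digit_eq_mono[OF QN_Qp[OF eQ] QN_Qp[OF cQ], of k k'] kk by blast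
    qed
    assume i: "i \<notin> F"
    show "\<eta> i 0 = 0"
    proof (cases "i \<in> G")
      case True
      then have "\<eta> i k' = c i k'" using e unfolding cyl_def by auto
      then have "\<eta> i 0 = c i 0" using Qp_digit_eq_mono[OF QN_Qp[OF eQ] QN_Qp[OF cQ], of 0 k'] by simp
      then show ?thesis using c i cyl_center by simp
    next
      case False then show ?thesis using e unfolding cyl_def by auto
    qed
  qed
qed

lemma cyl_inter:
  assumes "c \<in> cyl p c F1 k1" "c \<in> cyl p c F2 k2"
  shows "cyl p c (F1 \<union> F2) (max k1 k2) \<subseteq> cyl p c F1 k1 \<inter> cyl p c F2 k2"
  using cyl_mono[OF assms(1), of "F1 \<union> F2" "max k1 k2"] cyl_mono[OF assms(2), of "F1 \<union> F2" "max k1 k2"]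
  by auto

lemma cyl_center_union: "c \<in> cyl p c F k \<Longrightarrow> c \<in> cyl p c (F \<union> G) k'"
  unfolding cyl_def by auto

lemma cyl_center_support: "c \<in> QN p \<Longrightarrow> c \<in> cyl p c {i. c i 0 \<noteq> 0} k"
  unfolding cyl_def by auto

lemma topspace_tau: "topspace (tau p) = QN p"
proof -
  have "openin (tau p) (QN p)"
  proof (rule tau_openI)
    show "\<forall>c\<in>QN p. \<exists>F k. finite F \<and> c \<in> cyl p c F k \<and> cyl p c F k \<subseteq> QN p"
    proof
      fix c assume c: "c \<in> QN p"
      have "finite {i. c i 0 \<noteq> 0}" using c QN_iff by blast
      then show "\<exists>F k. finite F \<and> c \<in> cyl p c F k \<and> cyl p c F k \<subseteq> QN p"
        using cyl_center_support[OF c, of 0] cyl_QN[of c "{i. c i 0 \<noteq> 0}" 0] by blast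
    qed
  qed simp
  then have "QN p \<subseteq> topspace (tau p)" by (rule openin_subset)
  moreover have "topspace (tau p) \<subseteq> QN p" using openin_tau[of "topspace (tau p)"] by simp
  ultimately show ?thesis by blast
qed

lemma continuous_map_tauD:
  assumes A: "continuous_map (tau p) (tau p) A" and c: "c \<in> QN p" and F: "finite F"
    and Ac: "A c \<in> cyl p (A c) F k"
  shows "\<exists>F' k'. finite F' \<and> c \<in> cyl p c F' k' \<and> A ` cyl p c F' k' \<subseteq> cyl p (A c) F k"
proof -
  have "openin (tau p) {x \<in> topspace (tau p). A x \<in> cyl p (A c) F k}"
    using A cyl_open[OF F Ac] unfolding continuous_map_def by blast
  moreover have "c \<in> {x \<in> topspace (tau p). A x \<in> cyl p (A c) F k}" using c Ac topspace_tau by simp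
  ultimately obtain F' k' where F': "finite F'" "c \<in> cyl p c F' k'" "cyl p c F' k' \<subseteq> {x \<in> topspace (tau p). A x \<in> cyl p (A c) F k}"
    using tau_openD by blast
  then show ?thesis by blast
qed

lemma continuous_map_tauI:
  assumes QQ: "\<And>\<xi>. \<xi> \<in> QN p \<Longrightarrow> f \<xi> \<in> QN p"
    and loc: "\<And>c F k. c \<in> QN p \<Longrightarrow> finite F \<Longrightarrow> f c \<in> cyl p (f c) F k \<Longrightarrow>
        \<exists>F' k'. finite F' \<and> c \<in> cyl p c F' k' \<and> f ` cyl p c F' k' \<subseteq> cyl p (f c) F k"
  shows "continuous_map (tau p) (tau p) f"
  unfolding continuous_map_def
proof (intro conjI allI impI)
  show "f \<in> topspace (tau p) \<rightarrow> topspace (tau p)" using QQ topspace_tau by auto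
  fix U assume U: "openin (tau p) U"
  show "openin (tau p) {x \<in> topspace (tau p). f x \<in> U}"
  proof (rule tau_openI)
    show "{x \<in> topspace (tau p). f x \<in> U} \<subseteq> QN p" using topspace_tau by auto
    show "\<forall>c\<in>{x \<in> topspace (tau p). f x \<in> U}. \<exists>F k. finite F \<and> c \<in> cyl p c F k \<and> cyl p c F k \<subseteq> {x \<in> topspace (tau p). f x \<in> U}"
    proof
      fix c assume "c \<in> {x \<in> topspace (tau p). f x \<in> U}"
      then have c: "c \<in> QN p" "f c \<in> U" using topspace_tau by auto
      obtain F k where Fk: "finite F" "f c \<in> cyl p (f c) F k" "cyl p (f c) F k \<subseteq> U"
        using tau_openD[OF U c(2)] by blast
      obtain F' k' where F': "finite F'" "c \<in> cyl p c F' k'" "f ` cyl p c F' k' \<subseteq> cyl p (f c) F k"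
        using loc[OF c(1) Fk(1,2)] by blast
      have "cyl p c F' k' \<subseteq> {x \<in> topspace (tau p). f x \<in> U}"
        using F'(3) Fk(3) cyl_QN topspace_tau by blast
      then show "\<exists>F k. finite F \<and> c \<in> cyl p c F k \<and> cyl p c F k \<subseteq> {x \<in> topspace (tau p). f x \<in> U}"
        using F'(1,2) by blast
    qed
  qed
qed

lemma qn_zero_QN: "qn_zero \<in> QN p"
  unfolding QN_iff qn_zero_def using qp_zero_Qp by (simp add: qp_zero_def)

lemma qn_add_QN: "\<xi> \<in> QN p \<Longrightarrow> \<eta> \<in> QN p \<Longrightarrow> qn_add p \<xi> \<eta> \<in> QN p"
proof -
  assume a: "\<xi> \<in> QN p" "\<eta> \<in> QN p"
  have "{i. qn_add p \<xi> \<eta> i 0 \<noteq> 0} \<subseteq> {i. \<xi> i 0 \<noteq> 0} \<union> {i. \<eta> i 0 \<noteq> 0}"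
    unfolding qn_add_def qp_add_def by auto
  moreover have "finite ({i. \<xi> i 0 \<noteq> 0} \<union> {i. \<eta> i 0 \<noteq> 0})" using a QN_iff by blast
  ultimately have "finite {i. qn_add p \<xi> \<eta> i 0 \<noteq> 0}" by (rule finite_subset)
  moreover have "\<forall>i. qn_add p \<xi> \<eta> i \<in> Qp p" unfolding qn_add_def using qp_add_Qp QN_Qp a by blast
  ultimately show ?thesis unfolding QN_iff by blast
qed

lemma qn_neg_QN: "\<xi> \<in> QN p \<Longrightarrow> qn_neg p \<xi> \<in> QN p"
proof -
  assume a: "\<xi> \<in> QN p"
  have "{i. qn_neg p \<xi> i 0 \<noteq> 0} \<subseteq> {i. \<xi> i 0 \<noteq> 0}"
    unfolding qn_neg_def qp_neg_def by auto
  moreover have "finite {i. \<xi> i 0 \<noteq> 0}" using a QN_iff by blast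
  ultimately have "finite {i. qn_neg p \<xi> i 0 \<noteq> 0}" by (rule finite_subset)
  moreover have "\<forall>i. qn_neg p \<xi> i \<in> Qp p" unfolding qn_neg_def using qp_neg_Qp QN_Qp a by blast
  ultimately show ?thesis unfolding QN_iff by blast
qed

lemma qn_smul_QN: "a \<in> Zp p \<Longrightarrow> \<xi> \<in> QN p \<Longrightarrow> qn_smul p a \<xi> \<in> QN p"
proof -
  assume a: "a \<in> Zp p" "\<xi> \<in> QN p"
  have aQ: "a \<in> Qp p" using a Zp_iff by blast
  have "{i. qn_smul p a \<xi> i 0 \<noteq> 0} \<subseteq> {i. \<xi> i 0 \<noteq> 0}"
  proof
    fix i assume i: "i \<in> {i. qn_smul p a \<xi> i 0 \<noteq> 0}"
    show "i \<in> {i. \<xi> i 0 \<noteq> 0}"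
    proof (rule ccontr)
      assume "i \<notin> {i. \<xi> i 0 \<noteq> 0}"
      then have "\<xi> i \<in> Zp p" using Zp_iff QN_Qp[OF a(2)] by auto
      then have "qp_mult p a (\<xi> i) \<in> Zp p" using Zp_mult_Zp a(1) by blast
      then show False using i Zp_iff unfolding qn_smul_def by auto
    qed
  qed
  moreover have "finite {i. \<xi> i 0 \<noteq> 0}" using a QN_iff by blast
  ultimately have "finite {i. qn_smul p a \<xi> i 0 \<noteq> 0}" by (rule finite_subset)
  moreover have "\<forall>i. qn_smul p a \<xi> i \<in> Qp p" unfolding qn_smul_def using qp_mult_Qp[OF aQ] QN_Qp a by blast
  ultimately show ?thesis unfolding QN_iff by blast
qed

lemma bdd_norms: "\<zeta> \<in> QN p \<Longrightarrow> bdd_above (range (\<lambda>i. qp_norm p (\<zeta> i)))"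
proof -
  assume z: "\<zeta> \<in> QN p"
  define B where "B = {i. \<zeta> i 0 \<noteq> 0}"
  have B: "finite B" using z QN_iff B_def by blast
  define M where "M = 1 + (\<Sum>i\<in>B. qp_norm p (\<zeta> i))"
  have "qp_norm p (\<zeta> i) \<le> M" for i
  proof (cases "i \<in> B")
    case True
    have "qp_norm p (\<zeta> i) \<le> (\<Sum>i\<in>B. qp_norm p (\<zeta> i))"
      using B True qp_norm_nonneg by (intro member_le_sum) auto
    then show ?thesis unfolding M_def by simp
  next
    case False
    then have "qp_norm p (\<zeta> i) \<le> 1" using QN_Qp[OF z] qp_norm_le_power_iff[of "\<zeta> i" 0] B_def by simp
    moreover have "0 \<le> (\<Sum>i\<in>B. qp_norm p (\<zeta> i))" using qp_norm_nonneg by (intro sum_nonneg) auto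
    ultimately show ?thesis unfolding M_def by simp
  qed
  then show ?thesis by (intro bdd_aboveI2) auto
qed

lemma qn_norm_diff_le_iff:
  assumes "\<xi> \<in> QN p" "\<eta> \<in> QN p"
  shows "qn_norm p (qn_add p \<eta> (qn_neg p \<xi>)) \<le> inverse (real p ^ k) \<longleftrightarrow> (\<forall>i. \<eta> i k = \<xi> i k)"
  unfolding qn_norm_def
  using cSUP_le_iff[OF _ bdd_norms[OF qn_add_QN[OF assms(2) qn_neg_QN[OF assms(1)]]]]
    qp_norm_diff_le_iff[OF QN_Qp[OF assms(1)] QN_Qp[OF assms(2)]]
  by (simp add: qn_add_def qn_neg_def)

lemma ntop_open: "openin (ntop p) U \<longleftrightarrow>
    U \<subseteq> QN p \<and> (\<forall>\<xi>\<in>U. \<exists>k. \<forall>\<eta>\<in>QN p. (\<forall>i. \<eta> i k = \<xi> i k) \<longrightarrow> \<eta> \<in> U)"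
  unfolding ntop_def
  by (intro openin_ball_topology_iff[where r = "\<lambda>k. inverse (real p ^ k)"
        and R = "\<lambda>k \<xi> \<eta>. \<forall>i. \<eta> i k = \<xi> i k"] inverse_power_pos inverse_power_less qn_norm_diff_le_iff)

lemma topspace_ntop: "topspace (ntop p) = QN p"
  unfolding ntop_def by (rule topspace_ball_topology)

lemma finite_digit_image:
  assumes C: "C \<subseteq> Qp p" and bnd: "\<forall>x\<in>C. val_ge p x D 0"
  shows "finite ((\<lambda>y. y k) ` C)"
proof -
  have "(\<lambda>y. y k) ` C \<subseteq> (\<lambda>a. of_int a / of_nat p ^ D) ` {0..<int p ^ (k + D)}"
  proof
    fix q assume "q \<in> (\<lambda>y. y k) ` C"
    then obtain y where y: "y \<in> C" "q = y k" by blast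
    have yQ: "y \<in> Qp p" using y C by blast
    have "y k * of_nat p ^ D \<in> \<int>" using val_ge_digit_Ints[OF yQ] bnd y(1) by blast
    then obtain a where a: "y k * of_nat p ^ D = of_int a" by (auto elim: Ints_cases)
    have "0 \<le> y k" "y k < of_nat p ^ k" using QpD[OF yQ, of k] by auto
    then have "0 \<le> y k * of_nat p ^ D" "y k * of_nat p ^ D < of_nat p ^ k * of_nat p ^ D"
      using p_power_pos[of D] by (auto intro: mult_strict_right_mono)
    then have h: "0 \<le> (of_int a :: rat)" "(of_int a :: rat) < of_int (int p ^ (k + D))"
      using a by (auto simp: power_add)
    have "a < int p ^ (k + D)" using h(2) by (rule of_int_less_iff[THEN iffD1])
    moreover have "0 \<le> a" using h(1) by simp
    ultimately have "a \<in> {0..<int p ^ (k + D)}" by simp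
    moreover have "q = of_int a / of_nat p ^ D" using a y(2) p_power_nonzero[of D] by (simp add: field_simps)
    ultimately show "q \<in> (\<lambda>a. of_int a / of_nat p ^ D) ` {0..<int p ^ (k + D)}" by blast
  qed
  then show ?thesis by (rule finite_subset) simp
qed

lemma compactin_qp_top_digits:
  assumes C: "C \<subseteq> Qp p" and bnd: "\<forall>x\<in>C. val_ge p x D 0"
    and closed: "\<And>x. x \<in> Qp p \<Longrightarrow> (\<forall>k. \<exists>y\<in>C. y k = x k) \<Longrightarrow> x \<in> C"
  shows "compactin (qp_top p) C"
  unfolding compactin_def
proof (intro conjI allI impI)
  show "C \<subseteq> topspace (qp_top p)" using C topspace_qp_top by simp
  fix \<U> assume \<U>: "(\<forall>U\<in>\<U>. openin (qp_top p) U) \<and> C \<subseteq> \<Union>\<U>"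
  define covered where "covered T \<longleftrightarrow> (\<exists>\<F>. finite \<F> \<and> \<F> \<subseteq> \<U> \<and> T \<subseteq> \<Union>\<F>)" for T
  define slice where "slice k c = {y \<in> C. y k = c}" for k c
  show "covered C" unfolding covered_def[symmetric]
  proof (rule ccontr)
    assume uncovered_C: "\<not> covered C"
    have uncovered_slice: "\<exists>c\<in>I. \<not> covered (S c)"
      if "\<not> covered T" "finite I" "T \<subseteq> (\<Union>c\<in>I. S c)" for T I and S :: "rat \<Rightarrow> _"
      unfolding covered_def by (rule not_finite_subcover_UN[OF that(1)[unfolded covered_def] that(2,3)])
    have "C \<subseteq> (\<Union>c\<in>(\<lambda>y. y 0) ` C. slice 0 c)" unfolding slice_def by blast
    then have base: "\<exists>c. \<not> covered (slice 0 c)"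
      using uncovered_slice[OF uncovered_C finite_digit_image[OF C bnd, of 0]] by blast
    have step: "\<exists>c'. \<not> covered (slice (Suc k) c') \<and> rmod p k c' = c"
      if uncovered: "\<not> covered (slice k c)" for k c
    proof -
      have "finite ((\<lambda>y. y (Suc k)) ` slice k c)"
        using finite_digit_image[OF C bnd, of "Suc k"] by (rule finite_subset[rotated]) (auto simp: slice_def)
      moreover have "slice k c \<subseteq> (\<Union>c'\<in>(\<lambda>y. y (Suc k)) ` slice k c. slice (Suc k) c')"
        unfolding slice_def by blast
      ultimately obtain y where y: "y \<in> slice k c" "\<not> covered (slice (Suc k) (y (Suc k)))"
        using uncovered_slice[OF uncovered] by blast
      have "rmod p k (y (Suc k)) = c" using y(1) C QpD unfolding slice_def by blast
      then show ?thesis using y(2) by blast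
    qed
    obtain s where s: "\<And>k. \<not> covered (slice k (s k)) \<and> rmod p k (s (Suc k)) = s k"
      using dependent_nat_choice[of "\<lambda>k c. \<not> covered (slice k c)" "\<lambda>k c c'. rmod p k c' = c"] base step
      by blast
    have attained: "\<exists>y\<in>C. y k = s k" for k
    proof (rule ccontr)
      assume "\<not> (\<exists>y\<in>C. y k = s k)"
      then have "covered (slice k (s k))" unfolding covered_def slice_def by auto
      then show False using s by blast
    qed
    have "s \<in> Qp p"
    proof (rule QpI)
      fix n
      obtain y where "y \<in> C" "y n = s n" using attained by blast
      then show "s n \<in> Zinv p \<and> 0 \<le> s n \<and> s n < of_nat p ^ n \<and> rmod p n (s (Suc n)) = s n"
        using QpD[of y n] C s by auto
    qed
    then have "s \<in> C" using closed attained by blast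
    then obtain U where U: "U \<in> \<U>" "s \<in> U" using \<U> by blast
    then obtain k where "\<forall>y\<in>Qp p. y k = s k \<longrightarrow> y \<in> U" using \<U> unfolding openin_qp_top by blast
    then have "covered (slice k (s k))"
      unfolding covered_def slice_def using U(1) C by (intro exI[of _ "{U}"]) auto
    then show False using s by blast
  qed
qed

end

section \<open>Continuous linear operators\<close>

definition digit_local_op :: "nat \<Rightarrow> ((nat \<Rightarrow> rat) \<Rightarrow> (nat \<Rightarrow> rat) \<Rightarrow> nat \<Rightarrow> rat) \<Rightarrow> bool" where
  "digit_local_op p h \<longleftrightarrow> (\<forall>x\<in>Qp p. \<forall>y\<in>Qp p. h x y \<in> Qp p) \<and> (\<forall>x\<in>Zp p. \<forall>y\<in>Zp p. h x y \<in> Zp p) \<and>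
     (\<forall>x\<in>Qp p. \<forall>y\<in>Qp p. \<forall>k. \<exists>K. \<forall>x'\<in>Qp p. \<forall>y'\<in>Qp p.
        x' K = x K \<longrightarrow> y' K = y K \<longrightarrow> h x' y' k = h x y k)"

context padic
begin

lemma Bop_QN: "A \<in> Bop p \<Longrightarrow> \<xi> \<in> QN p \<Longrightarrow> A \<xi> \<in> QN p"
  unfolding Bop_def continuous_map_def using topspace_tau by auto

lemma Bop_cont: "A \<in> Bop p \<Longrightarrow> continuous_map (tau p) (tau p) A"
  unfolding Bop_def by blast

lemma Bop_additive: "A \<in> Bop p \<Longrightarrow> \<xi> \<in> QN p \<Longrightarrow> \<eta> \<in> QN p \<Longrightarrow> A (qn_add p \<xi> \<eta>) = qn_add p (A \<xi>) (A \<eta>)"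
  unfolding Bop_def by blast

lemma Bop_homogeneous: "A \<in> Bop p \<Longrightarrow> a \<in> Zp p \<Longrightarrow> \<xi> \<in> QN p \<Longrightarrow> A (qn_smul p a \<xi>) = qn_smul p a (A \<xi>)"
  unfolding Bop_def by blast

lemma Bop_map_zero: "A \<in> Bop p \<Longrightarrow> A qn_zero = qn_zero"
proof -
  assume A: "A \<in> Bop p"
  have "qn_add p qn_zero qn_zero = qn_zero"
    unfolding qn_add_def qn_zero_def qp_add_def qp_zero_def by simp
  then have e: "A qn_zero = qn_add p (A qn_zero) (A qn_zero)" using Bop_additive[OF A qn_zero_QN qn_zero_QN] by simp
  show ?thesis
  proof (rule ext)
    fix i
    have "A qn_zero i \<in> Qp p" using Bop_QN[OF A qn_zero_QN] QN_Qp by blast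
    moreover have "qp_add p (A qn_zero i) (A qn_zero i) = A qn_zero i"
      using fun_cong[OF e, of i] unfolding qn_add_def by simp
    ultimately show "A qn_zero i = qn_zero i" using qp_add_self_zero unfolding qn_zero_def by blast
  qed
qed

lemma digit_local_opD:
  assumes "digit_local_op p h"
  shows "x \<in> Qp p \<Longrightarrow> y \<in> Qp p \<Longrightarrow> h x y \<in> Qp p"
    and "x \<in> Zp p \<Longrightarrow> y \<in> Zp p \<Longrightarrow> h x y \<in> Zp p"
    and "x \<in> Qp p \<Longrightarrow> y \<in> Qp p \<Longrightarrow>
      \<exists>K. \<forall>x'\<in>Qp p. \<forall>y'\<in>Qp p. x' K = x K \<longrightarrow> y' K = y K \<longrightarrow> h x' y' k = h x y k"
  using assms unfolding digit_local_op_def by blast+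

lemma QN_digitwise:
  assumes h: "digit_local_op p h" and \<xi>: "\<xi> \<in> QN p" and \<eta>: "\<eta> \<in> QN p"
  shows "(\<lambda>i. h (\<xi> i) (\<eta> i)) \<in> QN p"
proof -
  have "h (\<xi> i) (\<eta> i) 0 = 0" if "\<xi> i 0 = 0" "\<eta> i 0 = 0" for i
  proof -
    have "\<xi> i \<in> Zp p" "\<eta> i \<in> Zp p" using that QN_Qp[OF \<xi>] QN_Qp[OF \<eta>] Zp_iff by blast+
    then show ?thesis using digit_local_opD(2)[OF h] Zp_iff by blast
  qed
  then have "{i. h (\<xi> i) (\<eta> i) 0 \<noteq> 0} \<subseteq> {i. \<xi> i 0 \<noteq> 0} \<union> {i. \<eta> i 0 \<noteq> 0}" by blast
  moreover have "finite ({i. \<xi> i 0 \<noteq> 0} \<union> {i. \<eta> i 0 \<noteq> 0})" using \<xi> \<eta> QN_iff by blast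
  ultimately have "finite {i. h (\<xi> i) (\<eta> i) 0 \<noteq> 0}" by (rule finite_subset)
  moreover have "h (\<xi> i) (\<eta> i) \<in> Qp p" for i
    using digit_local_opD(1)[OF h QN_Qp[OF \<xi>] QN_Qp[OF \<eta>]] .
  ultimately show ?thesis unfolding QN_iff by blast
qed

lemma cyl_digitwise:
  assumes h: "digit_local_op p h" and G: "finite G" and \<xi>: "\<xi> \<in> QN p" and \<eta>: "\<eta> \<in> QN p"
  shows "\<exists>K. \<forall>\<xi>'\<in>cyl p \<xi> G K. \<forall>\<eta>'\<in>cyl p \<eta> G K.
           (\<lambda>i. h (\<xi>' i) (\<eta>' i)) \<in> cyl p (\<lambda>i. h (\<xi> i) (\<eta> i)) G k"
proof -
  have "\<forall>i\<in>G. \<exists>K. \<forall>x'\<in>Qp p. \<forall>y'\<in>Qp p. x' K = \<xi> i K \<longrightarrow> y' K = \<eta> i K \<longrightarrow>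
      h x' y' k = h (\<xi> i) (\<eta> i) k"
    using digit_local_opD(3)[OF h QN_Qp[OF \<xi>] QN_Qp[OF \<eta>]] by blast
  then obtain Kf where Kf: "\<forall>i\<in>G. \<forall>x'\<in>Qp p. \<forall>y'\<in>Qp p. x' (Kf i) = \<xi> i (Kf i) \<longrightarrow>
      y' (Kf i) = \<eta> i (Kf i) \<longrightarrow> h x' y' k = h (\<xi> i) (\<eta> i) k"
    by (rule bchoice[THEN exE])
  define K where "K = (\<Sum>i\<in>G. Kf i)"
  have Kf_le: "i \<in> G \<Longrightarrow> Kf i \<le> K" for i unfolding K_def using G by (intro member_le_sum) auto
  have "(\<lambda>i. h (\<xi>' i) (\<eta>' i)) \<in> cyl p (\<lambda>i. h (\<xi> i) (\<eta> i)) G k"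
    if \<xi>': "\<xi>' \<in> cyl p \<xi> G K" and \<eta>': "\<eta>' \<in> cyl p \<eta> G K" for \<xi>' \<eta>'
  proof -
    have Q: "\<xi>' \<in> QN p" "\<eta>' \<in> QN p" using \<xi>' \<eta>' cyl_QN by blast+
    have "h (\<xi>' i) (\<eta>' i) k = h (\<xi> i) (\<eta> i) k" if i: "i \<in> G" for i
    proof -
      have "\<xi>' i K = \<xi> i K" "\<eta>' i K = \<eta> i K" using \<xi>' \<eta>' i unfolding cyl_def by auto
      then have "\<xi>' i (Kf i) = \<xi> i (Kf i)" "\<eta>' i (Kf i) = \<eta> i (Kf i)"
        using Qp_digit_eq_mono[OF QN_Qp[OF Q(1)] QN_Qp[OF \<xi>]] Qp_digit_eq_mono[OF QN_Qp[OF Q(2)] QN_Qp[OF \<eta>]]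
          Kf_le[OF i] by blast+
      then show ?thesis using Kf i QN_Qp[OF Q(1)] QN_Qp[OF Q(2)] by blast
    qed
    moreover have "h (\<xi>' i) (\<eta>' i) 0 = 0" if "i \<notin> G" for i
    proof -
      have "\<xi>' i \<in> Zp p" "\<eta>' i \<in> Zp p"
        using \<xi>' \<eta>' that QN_Qp[OF Q(1)] QN_Qp[OF Q(2)] unfolding cyl_def Zp_iff by auto
      then show ?thesis using digit_local_opD(2)[OF h] Zp_iff by blast
    qed
    ultimately show ?thesis unfolding cyl_def using QN_digitwise[OF h Q] by blast
  qed
  then show ?thesis by blast
qed

lemma continuous_map_tau_digitwise:
  assumes h: "digit_local_op p h"
    and A: "continuous_map (tau p) (tau p) A" and B: "continuous_map (tau p) (tau p) B"
  shows "continuous_map (tau p) (tau p) (\<lambda>\<xi> i. h (A \<xi> i) (B \<xi> i))"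
proof (rule continuous_map_tauI)
  have AQ: "\<xi> \<in> QN p \<Longrightarrow> A \<xi> \<in> QN p" and BQ: "\<xi> \<in> QN p \<Longrightarrow> B \<xi> \<in> QN p" for \<xi>
    using A B unfolding continuous_map_def topspace_tau by blast+
  show "(\<lambda>i. h (A \<xi> i) (B \<xi> i)) \<in> QN p" if "\<xi> \<in> QN p" for \<xi>
    by (rule QN_digitwise[OF h AQ[OF that] BQ[OF that]])
  fix c F k assume c: "c \<in> QN p" and F: "finite F"
    and fc: "(\<lambda>i. h (A c i) (B c i)) \<in> cyl p (\<lambda>i. h (A c i) (B c i)) F k"
  define G where "G = F \<union> {i. A c i 0 \<noteq> 0} \<union> {i. B c i 0 \<noteq> 0}"
  have G: "finite G" unfolding G_def using F AQ[OF c] BQ[OF c] QN_iff by blast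
  obtain K where K: "\<forall>\<xi>'\<in>cyl p (A c) G K. \<forall>\<eta>'\<in>cyl p (B c) G K.
      (\<lambda>i. h (\<xi>' i) (\<eta>' i)) \<in> cyl p (\<lambda>i. h (A c i) (B c i)) G k"
    using cyl_digitwise[OF h G AQ[OF c] BQ[OF c]] by blast
  have "A c \<in> cyl p (A c) G K" "B c \<in> cyl p (B c) G K"
    unfolding cyl_center G_def using AQ[OF c] BQ[OF c] by auto
  then obtain F1 k1 F2 k2 where
    F1: "finite F1" "c \<in> cyl p c F1 k1" "A ` cyl p c F1 k1 \<subseteq> cyl p (A c) G K" and
    F2: "finite F2" "c \<in> cyl p c F2 k2" "B ` cyl p c F2 k2 \<subseteq> cyl p (B c) G K"
    using continuous_map_tauD[OF A c G] continuous_map_tauD[OF B c G] by meson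
  have "(\<lambda>i. h (A \<xi> i) (B \<xi> i)) \<in> cyl p (\<lambda>i. h (A c i) (B c i)) F k"
    if "\<xi> \<in> cyl p c (F1 \<union> F2) (max k1 k2)" for \<xi>
  proof -
    have "\<xi> \<in> cyl p c F1 k1" "\<xi> \<in> cyl p c F2 k2" using cyl_inter[OF F1(2) F2(2)] that by blast+
    then have "A \<xi> \<in> cyl p (A c) G K" "B \<xi> \<in> cyl p (B c) G K" using F1(3) F2(3) by blast+
    then have "(\<lambda>i. h (A \<xi> i) (B \<xi> i)) \<in> cyl p (\<lambda>i. h (A c i) (B c i)) G k" using K by blast
    moreover have "cyl p (\<lambda>i. h (A c i) (B c i)) G k \<subseteq> cyl p (\<lambda>i. h (A c i) (B c i)) F k"
      by (rule cyl_mono[OF fc]) (auto simp: G_def)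
    ultimately show ?thesis by blast
  qed
  moreover have "finite (F1 \<union> F2)" "c \<in> cyl p c (F1 \<union> F2) (max k1 k2)"
    using F1(1,2) F2(1) cyl_center_union by blast+
  ultimately show "\<exists>F' k'. finite F' \<and> c \<in> cyl p c F' k' \<and>
      (\<lambda>\<xi> i. h (A \<xi> i) (B \<xi> i)) ` cyl p c F' k' \<subseteq> cyl p (\<lambda>i. h (A c i) (B c i)) F k"
    by blast
qed

lemma digit_local_op_add: "digit_local_op p (qp_add p)"
  unfolding digit_local_op_def
proof (intro conjI ballI allI)
  show "qp_add p x y \<in> Qp p" if "x \<in> Qp p" "y \<in> Qp p" for x y using qp_add_Qp that .
  show "qp_add p x y \<in> Zp p" if "x \<in> Zp p" "y \<in> Zp p" for x y using qp_add_Zp that .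
  show "\<exists>K. \<forall>x'\<in>Qp p. \<forall>y'\<in>Qp p. x' K = x K \<longrightarrow> y' K = y K \<longrightarrow> qp_add p x' y' k = qp_add p x y k"
    for x y k by (intro exI[of _ k]) (simp add: qp_add_def)
qed

lemma digit_local_op_neg: "digit_local_op p (\<lambda>x y. qp_neg p x)"
  unfolding digit_local_op_def
proof (intro conjI ballI allI)
  show "qp_neg p x \<in> Qp p" if "x \<in> Qp p" for x using qp_neg_Qp that .
  show "qp_neg p x \<in> Zp p" if "x \<in> Zp p" for x using qp_neg_Zp that .
  show "\<exists>K. \<forall>x'\<in>Qp p. \<forall>y'\<in>Qp p. x' K = x K \<longrightarrow> y' K = y K \<longrightarrow> qp_neg p x' k = qp_neg p x k"
    for x y :: "nat \<Rightarrow> rat" and k by (intro exI[of _ k]) (simp add: qp_neg_def)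
qed

lemma digit_local_op_smul:
  assumes a: "a \<in> Zp p"
  shows "digit_local_op p (\<lambda>x y. qp_mult p a x)"
  unfolding digit_local_op_def
proof (intro conjI ballI allI)
  show "qp_mult p a x \<in> Qp p" if "x \<in> Qp p" for x using qp_mult_Qp a that Zp_iff by blast
  show "qp_mult p a x \<in> Zp p" if "x \<in> Zp p" for x using Zp_mult_Zp[OF a that] .
  fix x y :: "nat \<Rightarrow> rat" and k assume x: "x \<in> Qp p"
  define K where "K = k + dexp p a + dexp p x"
  have "qp_mult p a x' k = qp_mult p a x k" if x': "x' \<in> Qp p" and e: "x' K = x K" for x'
  proof -
    have "x' 0 = x 0" using Qp_digit_eq_mono[OF x' x, of 0 K] e by simp
    then have "dexp p x' = dexp p x" by (rule dexp_digit0)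
    then show ?thesis unfolding qp_mult_def Let_def using e K_def by simp
  qed
  then show "\<exists>K. \<forall>x'\<in>Qp p. \<forall>y'\<in>Qp p. x' K = x K \<longrightarrow> y' K = y K \<longrightarrow> qp_mult p a x' k = qp_mult p a x k"
    by blast
qed

lemma continuous_map_tau_add:
  "continuous_map (tau p) (tau p) A \<Longrightarrow> continuous_map (tau p) (tau p) B \<Longrightarrow>
   continuous_map (tau p) (tau p) (\<lambda>\<xi>. qn_add p (A \<xi>) (B \<xi>))"
  unfolding qn_add_def by (rule continuous_map_tau_digitwise[OF digit_local_op_add])

lemma continuous_map_tau_neg:
  "continuous_map (tau p) (tau p) A \<Longrightarrow> continuous_map (tau p) (tau p) (\<lambda>\<xi>. qn_neg p (A \<xi>))"
  using continuous_map_tau_digitwise[OF digit_local_op_neg, of A A] unfolding qn_neg_def .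

lemma continuous_map_tau_smul:
  "a \<in> Zp p \<Longrightarrow> continuous_map (tau p) (tau p) A \<Longrightarrow>
   continuous_map (tau p) (tau p) (\<lambda>\<xi>. qn_smul p a (A \<xi>))"
  using continuous_map_tau_digitwise[OF digit_local_op_smul, of a A A] unfolding qn_smul_def .

lemma Bop_add: "A \<in> Bop p \<Longrightarrow> B \<in> Bop p \<Longrightarrow> (\<lambda>\<xi>. qn_add p (A \<xi>) (B \<xi>)) \<in> Bop p"
proof -
  assume A: "A \<in> Bop p" and B: "B \<in> Bop p"
  show ?thesis unfolding Bop_def
  proof (intro CollectI conjI ballI)
    show "continuous_map (tau p) (tau p) (\<lambda>\<xi>. qn_add p (A \<xi>) (B \<xi>))"
      by (rule continuous_map_tau_add[OF Bop_cont[OF A] Bop_cont[OF B]])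
    fix \<xi> \<eta> assume x: "\<xi> \<in> QN p" and y: "\<eta> \<in> QN p"
    show "qn_add p (A (qn_add p \<xi> \<eta>)) (B (qn_add p \<xi> \<eta>)) = qn_add p (qn_add p (A \<xi>) (B \<xi>)) (qn_add p (A \<eta>) (B \<eta>))"
      unfolding Bop_additive[OF A x y] Bop_additive[OF B x y] by (simp add: qn_add_def qp_add_swap)
  next
    fix a \<xi> assume a: "a \<in> Zp p" and x: "\<xi> \<in> QN p"
    have aQ: "a \<in> Qp p" using a Zp_iff by blast
    show "qn_add p (A (qn_smul p a \<xi>)) (B (qn_smul p a \<xi>)) = qn_smul p a (qn_add p (A \<xi>) (B \<xi>))"
      unfolding Bop_homogeneous[OF A a x] Bop_homogeneous[OF B a x]
      using qp_mult_distrib[OF aQ QN_Qp[OF Bop_QN[OF A x]] QN_Qp[OF Bop_QN[OF B x]]]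
      by (simp add: qn_add_def qn_smul_def)
  qed
qed

lemma Bop_neg: "A \<in> Bop p \<Longrightarrow> (\<lambda>\<xi>. qn_neg p (A \<xi>)) \<in> Bop p"
proof -
  assume A: "A \<in> Bop p"
  show ?thesis unfolding Bop_def
  proof (intro CollectI conjI ballI)
    show "continuous_map (tau p) (tau p) (\<lambda>\<xi>. qn_neg p (A \<xi>))"
      by (rule continuous_map_tau_neg[OF Bop_cont[OF A]])
    fix \<xi> \<eta> assume x: "\<xi> \<in> QN p" and y: "\<eta> \<in> QN p"
    show "qn_neg p (A (qn_add p \<xi> \<eta>)) = qn_add p (qn_neg p (A \<xi>)) (qn_neg p (A \<eta>))"
      unfolding Bop_additive[OF A x y] by (simp add: qn_add_def qn_neg_def qp_neg_add)
  next
    fix a \<xi> assume a: "a \<in> Zp p" and x: "\<xi> \<in> QN p"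
    have aQ: "a \<in> Qp p" using a Zp_iff by blast
    show "qn_neg p (A (qn_smul p a \<xi>)) = qn_smul p a (qn_neg p (A \<xi>))"
      unfolding Bop_homogeneous[OF A a x]
      using qp_mult_neg[OF aQ QN_Qp[OF Bop_QN[OF A x]]]
      by (simp add: qn_neg_def qn_smul_def)
  qed
qed

lemma Bop_smul: "a \<in> Zp p \<Longrightarrow> A \<in> Bop p \<Longrightarrow> (\<lambda>\<xi>. qn_smul p a (A \<xi>)) \<in> Bop p"
proof -
  assume a: "a \<in> Zp p" and A: "A \<in> Bop p"
  have aQ: "a \<in> Qp p" using a Zp_iff by blast
  show ?thesis unfolding Bop_def
  proof (intro CollectI conjI ballI)
    show "continuous_map (tau p) (tau p) (\<lambda>\<xi>. qn_smul p a (A \<xi>))"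
      by (rule continuous_map_tau_smul[OF a Bop_cont[OF A]])
    fix \<xi> \<eta> assume x: "\<xi> \<in> QN p" and y: "\<eta> \<in> QN p"
    show "qn_smul p a (A (qn_add p \<xi> \<eta>)) = qn_add p (qn_smul p a (A \<xi>)) (qn_smul p a (A \<eta>))"
      unfolding Bop_additive[OF A x y]
      using qp_mult_distrib[OF aQ QN_Qp[OF Bop_QN[OF A x]] QN_Qp[OF Bop_QN[OF A y]]]
      by (simp add: qn_add_def qn_smul_def)
  next
    fix b \<xi> assume b: "b \<in> Zp p" and x: "\<xi> \<in> QN p"
    have bQ: "b \<in> Qp p" using b Zp_iff by blast
    show "qn_smul p a (A (qn_smul p b \<xi>)) = qn_smul p b (qn_smul p a (A \<xi>))"
      unfolding Bop_homogeneous[OF A b x]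
      using qp_mult_lcomm[OF aQ bQ QN_Qp[OF Bop_QN[OF A x]]]
      by (simp add: qn_smul_def)
  qed
qed

lemma Bop_comp: "A \<in> Bop p \<Longrightarrow> B \<in> Bop p \<Longrightarrow> A \<circ> B \<in> Bop p"
proof -
  assume A: "A \<in> Bop p" and B: "B \<in> Bop p"
  show ?thesis unfolding Bop_def
  proof (intro CollectI conjI ballI)
    show "continuous_map (tau p) (tau p) (A \<circ> B)"
      by (rule continuous_map_compose[OF Bop_cont[OF B] Bop_cont[OF A]])
    fix \<xi> \<eta> assume x: "\<xi> \<in> QN p" and y: "\<eta> \<in> QN p"
    show "(A \<circ> B) (qn_add p \<xi> \<eta>) = qn_add p ((A \<circ> B) \<xi>) ((A \<circ> B) \<eta>)"
      using Bop_additive[OF B x y] Bop_additive[OF A Bop_QN[OF B x] Bop_QN[OF B y]] by simp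
  next
    fix a \<xi> assume a: "a \<in> Zp p" and x: "\<xi> \<in> QN p"
    show "(A \<circ> B) (qn_smul p a \<xi>) = qn_smul p a ((A \<circ> B) \<xi>)"
      using Bop_homogeneous[OF B a x] Bop_homogeneous[OF A a Bop_QN[OF B x]] by simp
  qed
qed

lemma Bop_zero: "(\<lambda>\<xi>. qn_zero) \<in> Bop p"
  unfolding Bop_def
proof (intro CollectI conjI ballI)
  show "continuous_map (tau p) (tau p) (\<lambda>\<xi>. qn_zero)" using qn_zero_QN topspace_tau by simp
  show "qn_zero = qn_add p qn_zero qn_zero" for \<xi> \<eta> :: qpseq
    unfolding qn_add_def qn_zero_def qp_add_def qp_zero_def by simp
  show "qn_zero = qn_smul p a qn_zero" for a and \<xi> :: qpseq
    unfolding qn_smul_def qn_zero_def using qp_mult_zero_right by simp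
qed

end

section \<open>Compact operators have entries tending to zero\<close>

definition scaled_delta :: "nat \<Rightarrow> nat \<Rightarrow> nat \<Rightarrow> qpseq" where
  "scaled_delta p k j = (\<lambda>i. if i = j then qp_pinv p k else qp_zero)"

definition trunc :: "qpseq \<Rightarrow> nat \<Rightarrow> qpseq" where
  "trunc \<eta> n = (\<lambda>i. if i < n then \<eta> i else qp_zero)"

definition entries_mod_finite :: "nat \<Rightarrow> qpop \<Rightarrow> bool" where
  "entries_mod_finite p A \<longleftrightarrow> (\<forall>k. finite {(i, j). entry p A i j k \<noteq> 0})"

context padic
begin

lemma delta_Qp: "delta p j i \<in> Qp p"
  unfolding delta_def using qp_one_Qp qp_zero_Qp by simp

lemma delta_0: "delta p j i 0 = 0"
  unfolding delta_def qp_zero_def using qp_one_0 by simp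

lemma delta_QN: "delta p j \<in> QN p"
  unfolding QN_iff using delta_Qp delta_0 by simp

lemma entry_Qp: "A \<in> Bop p \<Longrightarrow> entry p A i j \<in> Qp p"
  unfolding entry_def using Bop_QN[OF _ delta_QN] QN_Qp by blast

lemma entries_to_zero_iff_mod_finite: "A \<in> Bop p \<Longrightarrow> entries_to_zero p A \<longleftrightarrow> entries_mod_finite p A"
proof -
  assume A: "A \<in> Bop p"
  have key: "qp_norm p (entry p A i j) > inverse (real p ^ k) \<longleftrightarrow> entry p A i j k \<noteq> 0" for i j k
    using qp_norm_le_inverse_iff[OF entry_Qp[OF A]] by (meson not_le)
  show ?thesis
  proof
    assume a: "entries_to_zero p A"
    show "entries_mod_finite p A" unfolding entries_mod_finite_def
    proof
      fix k
      have "finite {(i, j). qp_norm p (entry p A i j) > inverse (real p ^ k)}"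
        using a inverse_power_pos unfolding entries_to_zero_def by blast
      then show "finite {(i, j). entry p A i j k \<noteq> 0}" using key by simp
    qed
  next
    assume a: "entries_mod_finite p A"
    show "entries_to_zero p A" unfolding entries_to_zero_def
    proof (intro allI impI)
      fix e :: real assume e: "e > 0"
      obtain k where k: "inverse (real p ^ k) < e" using inverse_power_less[OF e] by blast
      have "{(i, j). qp_norm p (entry p A i j) > e} \<subseteq> {(i, j). entry p A i j k \<noteq> 0}"
      proof (clarify)
        fix i j assume ie: "e < qp_norm p (entry p A i j)" and z: "entry p A i j k = 0"
        then have "\<not> inverse (real p ^ k) < qp_norm p (entry p A i j)" using key by blast
        then show False using ie k by linarith
      qed
      then show "finite {(i, j). qp_norm p (entry p A i j) > e}"
        using a unfolding entries_mod_finite_def by (meson finite_subset)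
    qed
  qed
qed

lemma scaled_delta_QN: "scaled_delta p k j \<in> QN p"
proof -
  have "{i. scaled_delta p k j i 0 \<noteq> 0} \<subseteq> {j}" unfolding scaled_delta_def qp_zero_def by auto
  then have "finite {i. scaled_delta p k j i 0 \<noteq> 0}" by (rule finite_subset) simp
  moreover have "\<forall>i. scaled_delta p k j i \<in> Qp p" unfolding scaled_delta_def using qp_pinv_Qp qp_zero_Qp by simp
  ultimately show ?thesis unfolding QN_iff by blast
qed

lemma qn_smul_ppow_scaled_delta: "qn_smul p (qp_ppow p k) (scaled_delta p k j) = delta p j"
  unfolding qn_smul_def scaled_delta_def delta_def
  using qp_ppow_pinv qp_mult_zero_right by (auto intro!: ext)

lemma nbounded_if_val_ge:
  assumes S: "S \<subseteq> QN p" and b: "\<forall>\<xi>\<in>S. \<forall>i. val_ge p (\<xi> i) d 0"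
  shows "nbounded p S"
  unfolding nbounded_def
proof (intro exI[of _ "real p ^ d"] ballI)
  fix \<xi> assume x: "\<xi> \<in> S"
  show "qn_norm p \<xi> \<le> real p ^ d"
    unfolding qn_norm_def
  proof (rule cSUP_least)
    fix i
    show "qp_norm p (\<xi> i) \<le> real p ^ d"
      using qp_norm_le_power_iff[OF QN_Qp] x S b val_ge_level_0_iff by blast
  qed simp
qed

lemma nbounded_val_ge:
  assumes S: "S \<subseteq> QN p" and bnd: "nbounded p S"
  shows "\<exists>d. \<forall>\<xi>\<in>S. \<forall>i. val_ge p (\<xi> i) d 0"
proof -
  obtain C where C: "\<forall>\<xi>\<in>S. qn_norm p \<xi> \<le> C" using bnd unfolding nbounded_def by blast
  obtain d where d: "C < real p ^ d" using real_arch_pow[OF p_gt_1] by blast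
  have "\<forall>\<xi>\<in>S. \<forall>i. val_ge p (\<xi> i) d 0"
  proof (intro ballI allI)
    fix \<xi> i assume x: "\<xi> \<in> S"
    have xQ: "\<xi> \<in> QN p" using x S by blast
    have "qp_norm p (\<xi> i) \<le> qn_norm p \<xi>"
      unfolding qn_norm_def by (rule cSUP_upper[OF _ bdd_norms[OF xQ]]) simp
    then have "qp_norm p (\<xi> i) \<le> real p ^ d" using C x d by force
    then show "val_ge p (\<xi> i) d 0" using qp_norm_le_power_iff[OF QN_Qp[OF xQ]] val_ge_level_0_iff by blast
  qed
  then show ?thesis by blast
qed

lemma val_ge_scaled_delta: "val_ge p (scaled_delta p k j i) k 0"
  unfolding scaled_delta_def using val_ge_qp_pinv val_ge_qp_zero by simp

lemma nbounded_range_scaled_delta: "nbounded p (range (scaled_delta p k))"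
  using nbounded_if_val_ge[of "range (scaled_delta p k)"] scaled_delta_QN val_ge_scaled_delta by blast

lemma entry_eq_ppow_mult: "A \<in> Bop p \<Longrightarrow> entry p A i j = qp_mult p (qp_ppow p k) (A (scaled_delta p k j) i)"
proof -
  assume A: "A \<in> Bop p"
  have "A (delta p j) = qn_smul p (qp_ppow p k) (A (scaled_delta p k j))"
    using Bop_homogeneous[OF A qp_ppow_Zp[of k] scaled_delta_QN[of k j]] qn_smul_ppow_scaled_delta[of k j] by simp
  then show ?thesis unfolding entry_def qn_smul_def by simp
qed

lemma entry_digit_eq_0_iff: "A \<in> Bop p \<Longrightarrow> entry p A i j k = 0 \<longleftrightarrow> A (scaled_delta p k j) i 0 = 0"
proof -
  assume A: "A \<in> Bop p"
  have w: "A (scaled_delta p k j) i \<in> Qp p" using Bop_QN[OF A scaled_delta_QN] QN_Qp by blast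
  have "entry p A i j k = 0 \<longleftrightarrow> val_ge p (entry p A i j) 0 k" using val_ge_0_iff_digit[OF entry_Qp[OF A]] by simp
  also have "\<dots> \<longleftrightarrow> val_ge p (qp_mult p (qp_ppow p k) (A (scaled_delta p k j) i)) 0 (0 + k)" using entry_eq_ppow_mult[OF A] by simp
  also have "\<dots> \<longleftrightarrow> val_ge p (A (scaled_delta p k j) i) 0 0" by (rule val_ge_qp_ppow_mult_shift_iff[OF w])
  also have "\<dots> \<longleftrightarrow> A (scaled_delta p k j) i 0 = 0" by (rule val_ge_0_iff_digit[OF w])
  finally show ?thesis .
qed

definition bounded_box :: "nat set \<Rightarrow> nat \<Rightarrow> qpseq set" where
  "bounded_box P d = {\<zeta> \<in> QN p. (\<forall>i. i \<notin> P \<longrightarrow> \<zeta> i 0 = 0) \<and> (\<forall>i. val_ge p (\<zeta> i) d 0)}"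

lemma bounded_box_open: "finite P \<Longrightarrow> openin (tau p) (bounded_box P d)"
proof (rule tau_openI)
  assume P: "finite P"
  show "bounded_box P d \<subseteq> QN p" unfolding bounded_box_def by blast
  show "\<forall>c\<in>bounded_box P d. \<exists>F k. finite F \<and> c \<in> cyl p c F k \<and> cyl p c F k \<subseteq> bounded_box P d"
  proof
    fix c assume c: "c \<in> bounded_box P d"
    have "c \<in> cyl p c P 0" using c unfolding bounded_box_def cyl_def by auto
    moreover have "cyl p c P 0 \<subseteq> bounded_box P d"
    proof
      fix \<eta> assume e: "\<eta> \<in> cyl p c P 0"
      have "val_ge p (\<eta> i) d 0" for i
      proof (cases "i \<in> P")
        case True
        then have "\<eta> i 0 = c i 0" using e unfolding cyl_def by blast
        then show ?thesis using c unfolding bounded_box_def val_ge_level_0_iff by simp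
      next
        case False
        then have "\<eta> i 0 = 0" using e unfolding cyl_def by blast
        then show ?thesis unfolding val_ge_level_0_iff by simp
      qed
      then show "\<eta> \<in> bounded_box P d" using e unfolding cyl_def bounded_box_def by blast
    qed
    ultimately show "\<exists>F k. finite F \<and> c \<in> cyl p c F k \<and> cyl p c F k \<subseteq> bounded_box P d" using P by blast
  qed
qed

lemma bounded_box_mono: "P \<subseteq> P' \<Longrightarrow> d \<le> d' \<Longrightarrow> bounded_box P d \<subseteq> bounded_box P' d'"
  unfolding bounded_box_def using val_ge_mono_exp by blast

lemma QN_in_bounded_box: "\<zeta> \<in> QN p \<Longrightarrow> \<exists>P d. finite P \<and> \<zeta> \<in> bounded_box P d"
proof -
  assume z: "\<zeta> \<in> QN p"
  define P where "P = {i. \<zeta> i 0 \<noteq> 0}"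
  have P: "finite P" using z QN_iff P_def by blast
  define d where "d = (\<Sum>i\<in>P. dexp p (\<zeta> i))"
  have "val_ge p (\<zeta> i) d 0" for i
  proof (cases "i \<in> P")
    case True
    have "dexp p (\<zeta> i) \<le> d" unfolding d_def using P True by (intro member_le_sum) auto
    then show ?thesis using val_ge_mono_exp[OF val_ge_dexp[OF QN_Qp[OF z]]] by blast
  next
    case False
    then show ?thesis unfolding val_ge_level_0_iff P_def by simp
  qed
  then have "\<zeta> \<in> bounded_box P d" using z unfolding bounded_box_def P_def by blast
  then show ?thesis using P by blast
qed

lemma compactin_tau_subset_bounded_box:
  assumes K: "compactin (tau p) K"
  shows "\<exists>P d. finite P \<and> K \<subseteq> bounded_box P d"
proof -
  define \<O> where "\<O> = (\<lambda>(P, d). bounded_box P d) ` {(P, d). finite P}"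
  have KQ: "K \<subseteq> QN p" using K compactin_subset_topspace topspace_tau by metis
  have "\<forall>U\<in>\<O>. openin (tau p) U" unfolding \<O>_def using bounded_box_open by auto
  moreover have "K \<subseteq> \<Union>\<O>"
  proof
    fix z assume "z \<in> K"
    then obtain P d where "finite P" "z \<in> bounded_box P d" using QN_in_bounded_box KQ by blast
    then show "z \<in> \<Union>\<O>" unfolding \<O>_def by blast
  qed
  ultimately obtain \<F> where F: "finite \<F>" "\<F> \<subseteq> \<O>" "K \<subseteq> \<Union>\<F>"
    using K unfolding compactin_def by meson
  have "\<forall>U\<in>\<F>. \<exists>Pd. finite (fst Pd) \<and> U = bounded_box (fst Pd) (snd Pd)"
  proof
    fix U assume "U \<in> \<F>"
    then have "U \<in> \<O>" using F(2) by blast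
    then obtain P d where "finite P" "U = bounded_box P d" unfolding \<O>_def by auto
    then show "\<exists>Pd. finite (fst Pd) \<and> U = bounded_box (fst Pd) (snd Pd)" by (intro exI[of _ "(P, d)"]) simp
  qed
  from bchoice[OF this] obtain g where g: "\<forall>U\<in>\<F>. finite (fst (g U)) \<and> U = bounded_box (fst (g U)) (snd (g U))"
    by blast
  define P where "P = (\<Union>U\<in>\<F>. fst (g U))"
  define d where "d = (\<Sum>U\<in>\<F>. snd (g U))"
  have P: "finite P" unfolding P_def using g by (intro finite_UN_I[OF F(1)]) blast
  have "U \<subseteq> bounded_box P d" if U: "U \<in> \<F>" for U
  proof -
    have "fst (g U) \<subseteq> P" unfolding P_def using U by blast
    moreover have "snd (g U) \<le> d" unfolding d_def using F(1) U by (intro member_le_sum) auto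
    ultimately show ?thesis using bounded_box_mono g U by metis
  qed
  then have "K \<subseteq> bounded_box P d" using F(3) by blast
  then show ?thesis using P by blast
qed

lemma compactin_tau_if_prod_top:
  assumes K: "compactin (prod_top p) K" and P: "finite P" and KX: "K \<subseteq> XP p P"
  shows "compactin (tau p) K"
proof (rule compactin_transfer[OF K])
  show "K \<subseteq> topspace (tau p)" using KX XP_QN[OF P] topspace_tau by blast
  fix U x assume U: "openin (tau p) U" and x: "x \<in> U" "x \<in> K"
  have "openin (subtopology (prod_top p) (XP p P)) (U \<inter> XP p P)" using U P openin_tau by blast
  then obtain V where V: "openin (prod_top p) V" "U \<inter> XP p P = V \<inter> XP p P" unfolding openin_subtopology by blast
  have "x \<in> V" using V(2) x KX by blast
  moreover have "V \<inter> K \<subseteq> U" using V(2) KX by blast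
  ultimately show "\<exists>V. openin (prod_top p) V \<and> x \<in> V \<and> V \<inter> K \<subseteq> U" using V(1) by blast
qed

lemma row_support_finite: "A \<in> Bop p \<Longrightarrow> finite {j. entry p A i j k \<noteq> 0}"
proof -
  assume A: "A \<in> Bop p"
  have c0: "qn_zero \<in> cyl p qn_zero {i} k" unfolding cyl_center using qn_zero_QN by (simp add: qn_zero_def qp_zero_def)
  obtain F k' where F: "finite F" "qn_zero \<in> cyl p qn_zero F k'" "A ` cyl p qn_zero F k' \<subseteq> cyl p (A qn_zero) {i} k"
    using continuous_map_tauD[OF Bop_cont[OF A] qn_zero_QN _ ] c0 Bop_map_zero[OF A] by (metis finite.emptyI finite_insert)
  have "{j. entry p A i j k \<noteq> 0} \<subseteq> F"
  proof
    fix j assume j: "j \<in> {j. entry p A i j k \<noteq> 0}"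
    show "j \<in> F"
    proof (rule ccontr)
      assume jF: "j \<notin> F"
      have "delta p j \<in> cyl p qn_zero F k'"
        unfolding cyl_def
      proof (intro CollectI conjI ballI allI impI)
        show "delta p j \<in> QN p" by (rule delta_QN)
        show "delta p j i' k' = qn_zero i' k'" if "i' \<in> F" for i'
          using that jF unfolding delta_def qn_zero_def by auto
        show "delta p j i' 0 = 0" for i' by (rule delta_0)
      qed
      then have "A (delta p j) \<in> cyl p qn_zero {i} k" using F(3) Bop_map_zero[OF A] by auto
      then have "entry p A i j k = 0" unfolding entry_def cyl_def qn_zero_def qp_zero_def by auto
      then show False using j by simp
    qed
  qed
  then show ?thesis using F(1) by (rule finite_subset)
qed

lemma column_support_finite: "A \<in> Bop p \<Longrightarrow> finite {i. entry p A i j k \<noteq> 0}"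
proof -
  assume A: "A \<in> Bop p"
  have "{i. entry p A i j k \<noteq> 0} = {i. A (scaled_delta p k j) i 0 \<noteq> 0}" using entry_digit_eq_0_iff[OF A] by blast
  then show ?thesis using Bop_QN[OF A scaled_delta_QN] QN_iff by simp
qed

lemma entries_mod_finite_if_isK: "A \<in> Bop p \<Longrightarrow> isK p A \<Longrightarrow> entries_mod_finite p A"
  unfolding entries_mod_finite_def
proof
  fix k assume A: "A \<in> Bop p" and K: "isK p A"
  have "range (scaled_delta p k) \<subseteq> QN p" using scaled_delta_QN by blast
  then obtain KK where KK: "compactin (tau p) KK" "A ` range (scaled_delta p k) \<subseteq> KK"
    using K nbounded_range_scaled_delta unfolding isK_def by blast
  obtain P d where P: "finite P" "KK \<subseteq> bounded_box P d" using compactin_tau_subset_bounded_box[OF KK(1)] by blast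
  have "{(i, j). entry p A i j k \<noteq> 0} \<subseteq> {(i, j). i \<in> P \<and> entry p A i j k \<noteq> 0}"
  proof (clarify)
    fix i j assume e: "entry p A i j k \<noteq> 0"
    have "A (scaled_delta p k j) \<in> bounded_box P d" using KK(2) P(2) by blast
    then have "i \<notin> P \<Longrightarrow> A (scaled_delta p k j) i 0 = 0" unfolding bounded_box_def by blast
    then show "i \<in> P" using e entry_digit_eq_0_iff[OF A] by blast
  qed
  moreover have "finite {(i, j). i \<in> P \<and> entry p A i j k \<noteq> 0}"
    using finite_pairs_rows[OF P(1), of "\<lambda>i j. entry p A i j k \<noteq> 0"] row_support_finite[OF A] by blast
  ultimately show "finite {(i, j). entry p A i j k \<noteq> 0}" by (rule finite_subset)
qed

lemma finite_residues_if_compactin_ntop: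
  assumes K: "compactin (ntop p) K"
  shows "finite ((\<lambda>\<zeta> i. \<zeta> i 0) ` K)"
proof -
  define U where "U \<zeta> = {\<eta> \<in> QN p. \<forall>i. \<eta> i 0 = \<zeta> i 0}" for \<zeta> :: qpseq
  have "openin (ntop p) (U \<zeta>)" for \<zeta>
    unfolding ntop_open U_def by (intro conjI ballI exI[of _ 0]) auto
  moreover have "K \<subseteq> \<Union>(U ` K)"
    using compactin_subset_topspace[OF K] topspace_ntop unfolding U_def by blast
  ultimately obtain \<F> where \<F>: "finite \<F>" "\<F> \<subseteq> U ` K" "K \<subseteq> \<Union>\<F>"
    using K unfolding compactin_def by (metis (no_types, lifting) imageE)
  obtain Z where "finite Z" "\<F> = U ` Z" using finite_subset_image[OF \<F>(1,2)] by blast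
  then have Z: "finite Z" "K \<subseteq> \<Union>(U ` Z)" using \<F>(3) by blast+
  have "(\<lambda>\<zeta> i. \<zeta> i 0) ` K \<subseteq> (\<lambda>\<zeta> i. \<zeta> i 0) ` Z"
  proof
    fix w assume "w \<in> (\<lambda>\<zeta> i. \<zeta> i 0) ` K"
    then obtain \<zeta> z where "w = (\<lambda>i. \<zeta> i 0)" "z \<in> Z" "\<zeta> \<in> U z" using Z(2) by blast
    then show "w \<in> (\<lambda>\<zeta> i. \<zeta> i 0) ` Z" unfolding U_def by auto
  qed
  then show ?thesis using Z(1) finite_subset by blast
qed

lemma entries_mod_finite_if_norm_compact:
  assumes A: "A \<in> Bop p" and M: "maps_to_norm_compact p A"
  shows "entries_mod_finite p A"
  unfolding entries_mod_finite_def
proof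
  fix k
  define col where "col j = (\<lambda>i. A (scaled_delta p k j) i 0)" for j
  have digit: "entry p A i j k \<noteq> 0 \<longleftrightarrow> col j i \<noteq> 0" for i j
    using entry_digit_eq_0_iff[OF A] unfolding col_def by simp
  have "range (scaled_delta p k) \<subseteq> QN p" using scaled_delta_QN by blast
  then obtain K where K: "compactin (ntop p) K" "A ` range (scaled_delta p k) \<subseteq> K"
    using M nbounded_range_scaled_delta unfolding maps_to_norm_compact_def by blast
  have "range col \<subseteq> (\<lambda>\<zeta> i. \<zeta> i 0) ` K" using K(2) unfolding col_def by blast
  then have cols: "finite (range col)" using finite_residues_if_compactin_ntop[OF K(1)] finite_subset by blast
  have "finite {j. col j = w}" if "w \<noteq> (\<lambda>i. 0)" for w
  proof -
    obtain i where "w i \<noteq> 0" using \<open>w \<noteq> (\<lambda>i. 0)\<close> by blast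
    then have "{j. col j = w} \<subseteq> {j. entry p A i j k \<noteq> 0}" using digit by auto
    then show ?thesis using row_support_finite[OF A] finite_subset by blast
  qed
  then have "finite (\<Union>w\<in>range col - {\<lambda>i. 0}. {j. col j = w})"
    using cols by (intro finite_UN_I) auto
  moreover have "{j. col j \<noteq> (\<lambda>i. 0)} \<subseteq> (\<Union>w\<in>range col - {\<lambda>i. 0}. {j. col j = w})" by blast
  ultimately have J: "finite {j. col j \<noteq> (\<lambda>i. 0)}" by (rule finite_subset[rotated])
  have "{(i, j). entry p A i j k \<noteq> 0} \<subseteq> (\<Union>j\<in>{j. col j \<noteq> (\<lambda>i. 0)}. (\<lambda>i. (i, j)) ` {i. entry p A i j k \<noteq> 0})"
  proof (clarify)
    fix i j assume "entry p A i j k \<noteq> 0"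
    moreover from this have "col j \<noteq> (\<lambda>i. 0)" using digit by force
    ultimately show "(i, j) \<in> (\<Union>j\<in>{j. col j \<noteq> (\<lambda>i. 0)}. (\<lambda>i. (i, j)) ` {i. entry p A i j k \<noteq> 0})"
      by blast
  qed
  moreover have "finite (\<Union>j\<in>{j. col j \<noteq> (\<lambda>i. 0)}. (\<lambda>i. (i, j)) ` {i. entry p A i j k \<noteq> 0})"
    using J column_support_finite[OF A] by blast
  ultimately show "finite {(i, j). entry p A i j k \<noteq> 0}" by (rule finite_subset)
qed

end

section \<open>Operators with entries tending to zero are compact\<close>

text \<open>If \<open>\<parallel>\<xi>\<parallel> \<le> p\<^sup>d\<close>, then \<open>A \<xi> i\<close> lies in \<open>row_envelope p A d i\<close>.\<close>
definition row_envelope :: "nat \<Rightarrow> qpop \<Rightarrow> nat \<Rightarrow> nat \<Rightarrow> (nat \<Rightarrow> rat) set" where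
  "row_envelope p A d i =
     {x \<in> Qp p. \<forall>d' k. (\<forall>j. val_ge p (entry p A i j) d' k) \<longrightarrow> val_ge p x (d' + d) k}"

context padic
begin

lemma trunc_QN: "\<eta> \<in> QN p \<Longrightarrow> trunc \<eta> n \<in> QN p"
proof -
  assume e: "\<eta> \<in> QN p"
  have "{i. trunc \<eta> n i 0 \<noteq> 0} \<subseteq> {i. \<eta> i 0 \<noteq> 0}" unfolding trunc_def qp_zero_def by auto
  moreover have "finite {i. \<eta> i 0 \<noteq> 0}" using e QN_iff by blast
  ultimately have "finite {i. trunc \<eta> n i 0 \<noteq> 0}" by (rule finite_subset)
  moreover have "\<forall>i. trunc \<eta> n i \<in> Qp p" unfolding trunc_def using QN_Qp[OF e] qp_zero_Qp by simp
  ultimately show ?thesis unfolding QN_iff by blast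
qed

lemma trunc_0: "trunc \<eta> 0 = qn_zero"
  unfolding trunc_def qn_zero_def by simp

lemma trunc_Suc: "(\<forall>i. \<eta> i \<in> Qp p) \<Longrightarrow> trunc \<eta> (Suc n) = qn_add p (trunc \<eta> n) (qn_smul p (\<eta> n) (delta p n))"
proof (rule ext)
  fix i assume e: "\<forall>i. \<eta> i \<in> Qp p"
  show "trunc \<eta> (Suc n) i = qn_add p (trunc \<eta> n) (qn_smul p (\<eta> n) (delta p n)) i"
  proof (cases "i < n")
    case True
    then show ?thesis unfolding trunc_def qn_add_def qn_smul_def delta_def
      using qp_mult_zero_right qp_add_zero_right e by simp
  next
    case False
    show ?thesis
    proof (cases "i = n")
      case True
      then show ?thesis unfolding trunc_def qn_add_def qn_smul_def delta_def
        using qp_mult_one_right qp_add_zero_left e by simp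
    next
      case False
      then show ?thesis using \<open>\<not> i < n\<close> unfolding trunc_def qn_add_def qn_smul_def delta_def
        using qp_mult_zero_right qp_add_zero_left qp_zero_Qp by simp
    qed
  qed
qed

lemma val_ge_row_trunc:
  assumes A: "A \<in> Bop p" and \<eta>: "\<eta> \<in> QN p" and Zp: "\<forall>i. \<eta> i 0 = 0"
    and row: "\<forall>j. val_ge p (entry p A i j) d k"
  shows "val_ge p (A (trunc \<eta> n) i) d k"
proof (induction n)
  case 0
  have "A (trunc \<eta> 0) = qn_zero" using trunc_0 Bop_map_zero[OF A] by simp
  then show ?case using val_ge_qp_zero by (simp add: qn_zero_def)
next
  case (Suc n)
  have \<eta>Q: "\<forall>i. \<eta> i \<in> Qp p" using QN_Qp[OF \<eta>] by blast
  have \<eta>Z: "\<eta> n \<in> Zp p" using \<eta>Q Zp Zp_iff by blast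
  have "qn_smul p (\<eta> n) (delta p n) \<in> QN p" by (rule qn_smul_QN[OF \<eta>Z delta_QN])
  then have "A (trunc \<eta> (Suc n)) = qn_add p (A (trunc \<eta> n)) (qn_smul p (\<eta> n) (A (delta p n)))"
    using Bop_additive[OF A trunc_QN[OF \<eta>]] Bop_homogeneous[OF A \<eta>Z delta_QN]
    by (simp add: trunc_Suc[OF \<eta>Q])
  then have "A (trunc \<eta> (Suc n)) i = qp_add p (A (trunc \<eta> n) i) (qp_mult p (\<eta> n) (entry p A i n))"
    unfolding qn_add_def qn_smul_def entry_def by simp
  then show ?case
    using val_ge_add[OF QN_Qp[OF Bop_QN[OF A trunc_QN[OF \<eta>]]] qp_mult_Qp[OF \<eta>Q[rule_format] entry_Qp[OF A]]
        Suc val_ge_Zp_mult[OF \<eta>Z entry_Qp[OF A] row[rule_format]]] by simp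
qed

lemma Bop_trunc_digit:
  assumes A: "A \<in> Bop p" and \<eta>: "\<eta> \<in> QN p" and Zp: "\<forall>i. \<eta> i 0 = 0"
  shows "\<exists>n. A (trunc \<eta> n) i k = A \<eta> i k"
proof -
  define F where "F = insert i {i'. A \<eta> i' 0 \<noteq> 0}"
  have A\<eta>: "A \<eta> \<in> QN p" by (rule Bop_QN[OF A \<eta>])
  have F: "finite F" unfolding F_def using A\<eta> QN_iff by blast
  have "A \<eta> \<in> cyl p (A \<eta>) F k" unfolding cyl_center F_def using A\<eta> by auto
  then obtain F' k' where F': "finite F'" "A ` cyl p \<eta> F' k' \<subseteq> cyl p (A \<eta>) F k"
    using continuous_map_tauD[OF Bop_cont[OF A] \<eta> F] by blast
  obtain n where n: "F' \<subseteq> {..<n}" using finite_nat_bounded[OF F'(1)] by blast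
  have "trunc \<eta> n \<in> cyl p \<eta> F' k'"
    unfolding cyl_def using trunc_QN[OF \<eta>] n Zp by (auto simp: trunc_def qp_zero_def)
  then have "A (trunc \<eta> n) \<in> cyl p (A \<eta>) F k" using F'(2) by blast
  then show ?thesis unfolding cyl_def F_def by blast
qed

lemma val_ge_row_bound:
  assumes A: "A \<in> Bop p" and \<eta>: "\<eta> \<in> QN p" and Zp: "\<forall>i. \<eta> i 0 = 0"
    and row: "\<forall>j. val_ge p (entry p A i j) d k"
  shows "val_ge p (A \<eta> i) d k"
  using Bop_trunc_digit[OF A \<eta> Zp, of i k] val_ge_row_trunc[OF assms] unfolding val_ge_def by metis

lemma image_nbounded_subset_envelope:
  assumes A: "A \<in> Bop p" and S: "S \<subseteq> QN p" and b: "\<forall>\<xi>\<in>S. \<forall>i. val_ge p (\<xi> i) d 0"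
  shows "A ` S \<subseteq> Pi\<^sub>E UNIV (row_envelope p A d)"
proof
  fix z assume "z \<in> A ` S"
  then obtain \<xi> where x: "\<xi> \<in> S" and z: "z = A \<xi>" by blast
  have xQ: "\<xi> \<in> QN p" using x S by blast
  define \<eta> where "\<eta> = qn_smul p (qp_ppow p d) \<xi>"
  have eQ: "\<eta> \<in> QN p" unfolding \<eta>_def by (rule qn_smul_QN[OF qp_ppow_Zp xQ])
  have ez: "\<forall>i. \<eta> i 0 = 0"
    unfolding \<eta>_def qn_smul_def using qp_ppow_mult_Zp QN_Qp[OF xQ] b x Zp_iff by blast
  have Ae: "A \<eta> = qn_smul p (qp_ppow p d) (A \<xi>)" unfolding \<eta>_def by (rule Bop_homogeneous[OF A qp_ppow_Zp xQ])
  have "A \<xi> i \<in> row_envelope p A d i" for i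
    unfolding row_envelope_def
  proof (intro CollectI conjI allI impI)
    have w: "A \<xi> i \<in> Qp p" using Bop_QN[OF A xQ] QN_Qp by blast
    then show "A \<xi> i \<in> Qp p" .
    fix d' k assume r: "\<forall>j. val_ge p (entry p A i j) d' k"
    have "val_ge p (A \<eta> i) d' k" by (rule val_ge_row_bound[OF A eQ ez r])
    then have "val_ge p (qp_mult p (qp_ppow p d) (A \<xi> i)) d' k" unfolding Ae qn_smul_def by simp
    then show "val_ge p (A \<xi> i) (d' + d) k" using val_ge_qp_ppow_mult_iff[OF w] by blast
  qed
  then show "z \<in> Pi\<^sub>E UNIV (row_envelope p A d)" unfolding z by (simp add: PiE_iff)
qed

lemma entries_mod_finite_row: "entries_mod_finite p A \<Longrightarrow> finite {j. entry p A i j k \<noteq> 0}"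
proof -
  assume E: "entries_mod_finite p A"
  have "{j. entry p A i j k \<noteq> 0} \<subseteq> snd ` {(i, j). entry p A i j k \<noteq> 0}" by force
  then show ?thesis using E unfolding entries_mod_finite_def by (meson finite_imageI finite_subset)
qed

lemma entries_mod_finite_rows: "entries_mod_finite p A \<Longrightarrow> finite {i. \<exists>j. entry p A i j k \<noteq> 0}"
proof -
  assume E: "entries_mod_finite p A"
  have "{i. \<exists>j. entry p A i j k \<noteq> 0} \<subseteq> fst ` {(i, j). entry p A i j k \<noteq> 0}" by force
  then show ?thesis using E unfolding entries_mod_finite_def by (meson finite_imageI finite_subset)
qed

lemma row_envelope_val_ge:
  assumes A: "A \<in> Bop p" and E: "entries_mod_finite p A"
  shows "\<exists>D. \<forall>x\<in>row_envelope p A d i. val_ge p x D 0"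
proof -
  define J where "J = {j. entry p A i j 0 \<noteq> 0}"
  have J: "finite J" unfolding J_def by (rule entries_mod_finite_row[OF E])
  define D0 where "D0 = (\<Sum>j\<in>J. dexp p (entry p A i j))"
  have "val_ge p (entry p A i j) D0 0" for j
  proof (cases "j \<in> J")
    case True
    have "dexp p (entry p A i j) \<le> D0" unfolding D0_def using J True by (intro member_le_sum) auto
    then show ?thesis using val_ge_mono_exp[OF val_ge_dexp[OF entry_Qp[OF A]]] by blast
  next
    case False
    then have "val_ge p (entry p A i j) 0 0" using val_ge_0_iff_digit[OF entry_Qp[OF A]] J_def by simp
    then show ?thesis using val_ge_mono_exp by blast
  qed
  then have "\<forall>x\<in>row_envelope p A d i. val_ge p x (D0 + d) 0" unfolding row_envelope_def by blast
  then show ?thesis by blast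
qed

lemma row_envelope_compactin:
  assumes A: "A \<in> Bop p" and E: "entries_mod_finite p A"
  shows "compactin (qp_top p) (row_envelope p A d i)"
proof -
  obtain D where D: "\<forall>x\<in>row_envelope p A d i. val_ge p x D 0" using row_envelope_val_ge[OF A E] by blast
  show ?thesis
  proof (rule compactin_qp_top_digits[OF _ D])
    show "row_envelope p A d i \<subseteq> Qp p" unfolding row_envelope_def by blast
    fix x assume x: "x \<in> Qp p" and cl: "\<forall>k. \<exists>y\<in>row_envelope p A d i. y k = x k"
    show "x \<in> row_envelope p A d i"
      unfolding row_envelope_def
    proof (intro CollectI conjI allI impI)
      show "x \<in> Qp p" by (rule x)
      fix d' k assume r: "\<forall>j. val_ge p (entry p A i j) d' k"
      obtain y where y: "y \<in> row_envelope p A d i" "y k = x k" using cl by blast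
      then have "val_ge p y (d' + d) k" using r unfolding row_envelope_def by blast
      then show "val_ge p x (d' + d) k" using y(2) unfolding val_ge_def by simp
    qed
  qed
qed

lemma envelope_compactin_prod_top:
  assumes A: "A \<in> Bop p" and E: "entries_mod_finite p A"
  shows "compactin (prod_top p) (Pi\<^sub>E UNIV (row_envelope p A d))"
  unfolding compactin_PiE using row_envelope_compactin[OF A E] by blast

lemma row_envelope_digit_0:
  assumes A: "A \<in> Bop p" and i: "\<forall>j. entry p A i j (k + d) = 0" and x: "x \<in> row_envelope p A d i"
  shows "x k = 0"
proof -
  have "\<forall>j. val_ge p (entry p A i j) 0 (k + d)" using i val_ge_0_iff_digit[OF entry_Qp[OF A]] by blast
  then have "val_ge p x (0 + d) (k + d)" using x unfolding row_envelope_def by blast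
  moreover have xQ: "x \<in> Qp p" using x unfolding row_envelope_def by blast
  ultimately have "val_ge p x 0 k" using val_ge_shift_iff by blast
  then show ?thesis using val_ge_0_iff_digit[OF xQ] by blast
qed

lemma envelope_subset_XP:
  assumes A: "A \<in> Bop p"
  shows "Pi\<^sub>E UNIV (row_envelope p A d) \<subseteq> XP p {i. \<exists>j. entry p A i j d \<noteq> 0}"
proof
  fix z assume z: "z \<in> Pi\<^sub>E UNIV (row_envelope p A d)"
  then have zi: "z i \<in> row_envelope p A d i" for i by (simp add: PiE_iff)
  show "z \<in> XP p {i. \<exists>j. entry p A i j d \<noteq> 0}"
    unfolding XP_iff
  proof (intro conjI allI impI)
    show "z i \<in> Qp p" for i using zi[of i] unfolding row_envelope_def by blast
    fix j assume "j \<notin> {i. \<exists>j. entry p A i j d \<noteq> 0}"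
    then have "\<forall>j'. entry p A j j' (0 + d) = 0" by simp
    then show "z j 0 = 0" using row_envelope_digit_0[OF A _ zi] by blast
  qed
qed

lemma envelope_compactin_tau:
  assumes A: "A \<in> Bop p" and E: "entries_mod_finite p A"
  shows "compactin (tau p) (Pi\<^sub>E UNIV (row_envelope p A d))"
  by (rule compactin_tau_if_prod_top[OF envelope_compactin_prod_top[OF A E]
        entries_mod_finite_rows[OF E] envelope_subset_XP[OF A]])

lemma envelope_compactin_ntop:
  assumes A: "A \<in> Bop p" and E: "entries_mod_finite p A"
  shows "compactin (ntop p) (Pi\<^sub>E UNIV (row_envelope p A d))"
proof -
  define P where "P = {i. \<exists>j. entry p A i j d \<noteq> 0}"
  have P: "finite P" unfolding P_def by (rule entries_mod_finite_rows[OF E])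
  have KX: "Pi\<^sub>E UNIV (row_envelope p A d) \<subseteq> XP p P" unfolding P_def by (rule envelope_subset_XP[OF A])
  have KQ: "Pi\<^sub>E UNIV (row_envelope p A d) \<subseteq> QN p" using KX XP_QN[OF P] by blast
  show ?thesis
  proof (rule compactin_transfer[OF envelope_compactin_prod_top[OF A E]])
    show "Pi\<^sub>E UNIV (row_envelope p A d) \<subseteq> topspace (ntop p)" using KQ topspace_ntop by blast
    fix U x assume U: "openin (ntop p) U" and x: "x \<in> U" "x \<in> Pi\<^sub>E UNIV (row_envelope p A d)"
    obtain k where k: "\<forall>\<eta>\<in>QN p. (\<forall>i. \<eta> i k = x i k) \<longrightarrow> \<eta> \<in> U" using U x(1) unfolding ntop_open by blast
    define G where "G = {i. \<exists>j. entry p A i j (k + d) \<noteq> 0}"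
    have G: "finite G" unfolding G_def by (rule entries_mod_finite_rows[OF E])
    define V where "V = {\<zeta> \<in> topspace (prod_top p). \<forall>i\<in>G. \<zeta> i ((\<lambda>_. k) i) = (\<lambda>i. x i k) i}"
    have V: "openin (prod_top p) V" unfolding V_def by (rule openin_prod_top_digit_cylinder[OF G])
    have xQ: "x \<in> QN p" using x KQ by blast
    have "x \<in> V" unfolding V_def topspace_prod_top using QN_Qp[OF xQ] by simp
    moreover have "V \<inter> Pi\<^sub>E UNIV (row_envelope p A d) \<subseteq> U"
    proof
      fix \<eta> assume e: "\<eta> \<in> V \<inter> Pi\<^sub>E UNIV (row_envelope p A d)"
      have eQ: "\<eta> \<in> QN p" using e KQ by blast
      have "\<eta> i k = x i k" for i
      proof (cases "i \<in> G")
        case True then show ?thesis using e unfolding V_def by auto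
      next
        case False
        then have z: "\<forall>j. entry p A i j (k + d) = 0" unfolding G_def by blast
        have a: "\<eta> i \<in> row_envelope p A d i" "x i \<in> row_envelope p A d i" using e x(2) by (auto simp: PiE_iff)
        show ?thesis using row_envelope_digit_0[OF A z a(1)] row_envelope_digit_0[OF A z a(2)] by simp
      qed
      then show "\<eta> \<in> U" using k eQ by blast
    qed
    ultimately show "\<exists>V. openin (prod_top p) V \<and> x \<in> V \<and> V \<inter> Pi\<^sub>E UNIV (row_envelope p A d) \<subseteq> U" using V by blast
  qed
qed

lemma isK_if_entries_mod_finite: "A \<in> Bop p \<Longrightarrow> entries_mod_finite p A \<Longrightarrow> isK p A"
  unfolding isK_def
proof (intro allI impI)
  fix S assume A: "A \<in> Bop p" and E: "entries_mod_finite p A" and S: "S \<subseteq> QN p \<and> nbounded p S"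
  obtain d where d: "\<forall>\<xi>\<in>S. \<forall>i. val_ge p (\<xi> i) d 0" using nbounded_val_ge S by blast
  show "\<exists>K. compactin (tau p) K \<and> A ` S \<subseteq> K"
    using envelope_compactin_tau[OF A E, of d] image_nbounded_subset_envelope[OF A _ d] S by blast
qed

lemma norm_compact_if_entries_mod_finite: "A \<in> Bop p \<Longrightarrow> entries_mod_finite p A \<Longrightarrow> maps_to_norm_compact p A"
  unfolding maps_to_norm_compact_def
proof (intro allI impI)
  fix S assume A: "A \<in> Bop p" and E: "entries_mod_finite p A" and S: "S \<subseteq> QN p \<and> nbounded p S"
  obtain d where d: "\<forall>\<xi>\<in>S. \<forall>i. val_ge p (\<xi> i) d 0" using nbounded_val_ge S by blast
  show "\<exists>K. compactin (ntop p) K \<and> A ` S \<subseteq> K"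
    using envelope_compactin_ntop[OF A E, of d] image_nbounded_subset_envelope[OF A _ d] S by blast
qed

lemma isK_iff_entries_mod_finite: "A \<in> Bop p \<Longrightarrow> isK p A \<longleftrightarrow> entries_mod_finite p A"
  using entries_mod_finite_if_isK isK_if_entries_mod_finite by blast

lemma isK_iff_entries_to_zero: "A \<in> Bop p \<Longrightarrow> isK p A \<longleftrightarrow> entries_to_zero p A"
  using isK_iff_entries_mod_finite entries_to_zero_iff_mod_finite by blast

lemma entries_to_zero_iff_norm_compact:
  "A \<in> Bop p \<Longrightarrow> entries_to_zero p A \<longleftrightarrow> maps_to_norm_compact p A"
  using entries_to_zero_iff_mod_finite norm_compact_if_entries_mod_finite
    entries_mod_finite_if_norm_compact by blast

section \<open>The ideal of compact operators\<close>

lemma K_zero: "(\<lambda>\<xi>. qn_zero) \<in> {A \<in> Bop p. isK p A}"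
proof -
  have "entries_mod_finite p (\<lambda>\<xi>. qn_zero)" unfolding entries_mod_finite_def entry_def qn_zero_def qp_zero_def by simp
  then show ?thesis using Bop_zero isK_iff_entries_mod_finite by blast
qed

lemma K_add:
  assumes A: "A \<in> {A \<in> Bop p. isK p A}" and B: "B \<in> {A \<in> Bop p. isK p A}"
  shows "(\<lambda>\<xi>. qn_add p (A \<xi>) (B \<xi>)) \<in> {A \<in> Bop p. isK p A}"
proof -
  have A1: "A \<in> Bop p" "entries_mod_finite p A" using A isK_iff_entries_mod_finite by auto
  have B1: "B \<in> Bop p" "entries_mod_finite p B" using B isK_iff_entries_mod_finite by auto
  have S: "(\<lambda>\<xi>. qn_add p (A \<xi>) (B \<xi>)) \<in> Bop p" by (rule Bop_add[OF A1(1) B1(1)])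
  have "entries_mod_finite p (\<lambda>\<xi>. qn_add p (A \<xi>) (B \<xi>))" unfolding entries_mod_finite_def
  proof
    fix k
    have "{(i, j). entry p (\<lambda>\<xi>. qn_add p (A \<xi>) (B \<xi>)) i j k \<noteq> 0} \<subseteq>
          {(i, j). entry p A i j k \<noteq> 0} \<union> {(i, j). entry p B i j k \<noteq> 0}"
      unfolding entry_def qn_add_def qp_add_def by auto
    moreover have "finite ({(i, j). entry p A i j k \<noteq> 0} \<union> {(i, j). entry p B i j k \<noteq> 0})"
      using A1(2) B1(2) unfolding entries_mod_finite_def by blast
    ultimately show "finite {(i, j). entry p (\<lambda>\<xi>. qn_add p (A \<xi>) (B \<xi>)) i j k \<noteq> 0}"
      by (rule finite_subset)
  qed
  then show ?thesis using S isK_iff_entries_mod_finite by blast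
qed

lemma K_neg:
  assumes A: "A \<in> {A \<in> Bop p. isK p A}"
  shows "(\<lambda>\<xi>. qn_neg p (A \<xi>)) \<in> {A \<in> Bop p. isK p A}"
proof -
  have A1: "A \<in> Bop p" "entries_mod_finite p A" using A isK_iff_entries_mod_finite by auto
  have S: "(\<lambda>\<xi>. qn_neg p (A \<xi>)) \<in> Bop p" by (rule Bop_neg[OF A1(1)])
  have "entries_mod_finite p (\<lambda>\<xi>. qn_neg p (A \<xi>))" unfolding entries_mod_finite_def
  proof
    fix k
    have "{(i, j). entry p (\<lambda>\<xi>. qn_neg p (A \<xi>)) i j k \<noteq> 0} \<subseteq> {(i, j). entry p A i j k \<noteq> 0}"
      unfolding entry_def qn_neg_def qp_neg_def by auto
    moreover have "finite {(i, j). entry p A i j k \<noteq> 0}" using A1(2) unfolding entries_mod_finite_def by blast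
    ultimately show "finite {(i, j). entry p (\<lambda>\<xi>. qn_neg p (A \<xi>)) i j k \<noteq> 0}"
      by (rule finite_subset)
  qed
  then show ?thesis using S isK_iff_entries_mod_finite by blast
qed

lemma K_smul:
  assumes a: "a \<in> Zp p" and A: "A \<in> {A \<in> Bop p. isK p A}"
  shows "(\<lambda>\<xi>. qn_smul p a (A \<xi>)) \<in> {A \<in> Bop p. isK p A}"
proof -
  have A1: "A \<in> Bop p" "entries_mod_finite p A" using A isK_iff_entries_mod_finite by auto
  have S: "(\<lambda>\<xi>. qn_smul p a (A \<xi>)) \<in> Bop p" by (rule Bop_smul[OF a A1(1)])
  have "entries_mod_finite p (\<lambda>\<xi>. qn_smul p a (A \<xi>))" unfolding entries_mod_finite_def
  proof
    fix k
    have "{(i, j). entry p (\<lambda>\<xi>. qn_smul p a (A \<xi>)) i j k \<noteq> 0} \<subseteq> {(i, j). entry p A i j k \<noteq> 0}"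
    proof (clarify)
      fix i j assume e: "entry p (\<lambda>\<xi>. qn_smul p a (A \<xi>)) i j k \<noteq> 0" and z: "entry p A i j k = 0"
      have eQ: "entry p A i j \<in> Qp p" by (rule entry_Qp[OF A1(1)])
      have "val_ge p (entry p A i j) 0 k" using z val_ge_0_iff_digit[OF eQ] by blast
      then have "val_ge p (qp_mult p a (entry p A i j)) 0 k" by (rule val_ge_Zp_mult[OF a eQ])
      then have "qp_mult p a (entry p A i j) k = 0"
        using val_ge_0_iff_digit[OF qp_mult_Qp[OF _ eQ]] a Zp_iff by blast
      then show False using e unfolding entry_def qn_smul_def by simp
    qed
    moreover have "finite {(i, j). entry p A i j k \<noteq> 0}" using A1(2) unfolding entries_mod_finite_def by blast
    ultimately show "finite {(i, j). entry p (\<lambda>\<xi>. qn_smul p a (A \<xi>)) i j k \<noteq> 0}"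
      by (rule finite_subset)
  qed
  then show ?thesis using S isK_iff_entries_mod_finite by blast
qed

lemma compactin_qp_top_Zp: "compactin (qp_top p) (Zp p)"
proof (rule compactin_qp_top_digits[where D = 0])
  show "Zp p \<subseteq> Qp p" using Zp_iff by blast
  show "\<forall>x\<in>Zp p. val_ge p x 0 0" using Zp_iff_val_ge by blast
  show "x \<in> Zp p" if "x \<in> Qp p" "\<forall>k. \<exists>y\<in>Zp p. y k = x k" for x
    using that(2)[rule_format, of 0] that(1) Zp_iff by auto
qed

lemma compactin_tau_Zp_power: "compactin (tau p) (Pi\<^sub>E UNIV (\<lambda>_. Zp p))"
proof (rule compactin_tau_if_prod_top)
  show "compactin (prod_top p) (Pi\<^sub>E UNIV (\<lambda>_. Zp p))"
    unfolding compactin_PiE using compactin_qp_top_Zp by blast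
  show "Pi\<^sub>E UNIV (\<lambda>_. Zp p) \<subseteq> XP p {}" unfolding XP_def by (auto simp: PiE_iff Zp_def)
qed simp

lemma Bop_image_nbounded:
  assumes B: "B \<in> Bop p" and S: "S \<subseteq> QN p" and bnd: "nbounded p S"
  shows "nbounded p (B ` S)"
proof -
  obtain d where d: "\<forall>\<xi>\<in>S. \<forall>i. val_ge p (\<xi> i) d 0" using nbounded_val_ge[OF S bnd] by blast
  have "compactin (tau p) (B ` Pi\<^sub>E UNIV (\<lambda>_. Zp p))"
    by (rule image_compactin[OF compactin_tau_Zp_power Bop_cont[OF B]])
  then obtain P d' where P: "B ` Pi\<^sub>E UNIV (\<lambda>_. Zp p) \<subseteq> bounded_box P d'"
    using compactin_tau_subset_bounded_box by blast
  have "val_ge p (B \<xi> i) (d' + d) 0" if \<xi>: "\<xi> \<in> S" for \<xi> i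
  proof -
    have \<xi>Q: "\<xi> \<in> QN p" using \<xi> S by blast
    have "qn_smul p (qp_ppow p d) \<xi> \<in> Pi\<^sub>E UNIV (\<lambda>_. Zp p)"
      unfolding qn_smul_def using qp_ppow_mult_Zp QN_Qp[OF \<xi>Q] d \<xi> by (auto simp: PiE_iff)
    then have "B (qn_smul p (qp_ppow p d) \<xi>) \<in> bounded_box P d'" using P by blast
    then have "qn_smul p (qp_ppow p d) (B \<xi>) \<in> bounded_box P d'"
      using Bop_homogeneous[OF B qp_ppow_Zp \<xi>Q] by simp
    then have "val_ge p (qp_mult p (qp_ppow p d) (B \<xi> i)) d' 0" unfolding bounded_box_def qn_smul_def by blast
    then show ?thesis using val_ge_qp_ppow_mult_iff[OF QN_Qp[OF Bop_QN[OF B \<xi>Q]]] by blast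
  qed
  moreover have "B ` S \<subseteq> QN p" using Bop_QN[OF B] S by blast
  ultimately show ?thesis using nbounded_if_val_ge[of "B ` S"] by blast
qed

lemma K_comp:
  assumes A: "A \<in> {A \<in> Bop p. isK p A}" and B: "B \<in> Bop p"
  shows "A \<circ> B \<in> {A \<in> Bop p. isK p A} \<and> B \<circ> A \<in> {A \<in> Bop p. isK p A}"
proof -
  have "\<exists>K. compactin (tau p) K \<and> (A \<circ> B) ` S \<subseteq> K" if S: "S \<subseteq> QN p \<and> nbounded p S" for S
  proof -
    have "B ` S \<subseteq> QN p \<and> nbounded p (B ` S)" using Bop_image_nbounded[OF B] Bop_QN[OF B] S by blast
    then obtain K where "compactin (tau p) K" "A ` B ` S \<subseteq> K" using A unfolding isK_def by blast
    then show ?thesis unfolding image_comp by blast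
  qed
  moreover have "\<exists>K. compactin (tau p) K \<and> (B \<circ> A) ` S \<subseteq> K" if S: "S \<subseteq> QN p \<and> nbounded p S" for S
  proof -
    obtain K where K: "compactin (tau p) K" "A ` S \<subseteq> K" using A S unfolding isK_def by blast
    have "compactin (tau p) (B ` K)" by (rule image_compactin[OF K(1) Bop_cont[OF B]])
    moreover have "(B \<circ> A) ` S \<subseteq> B ` K" using K(2) by auto
    ultimately show ?thesis by blast
  qed
  moreover have "A \<circ> B \<in> Bop p" "B \<circ> A \<in> Bop p" using A B Bop_comp by auto
  ultimately show ?thesis unfolding isK_def by auto
qed

lemma qn_pair_delta:
  assumes z: "\<zeta> \<in> QN p"
  shows "qn_pair p \<zeta> (delta p i) = \<zeta> i 0"
proof -
  define g where "g i' = qp_mult p (\<zeta> i') (delta p i i') 0" for i'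
  have "\<forall>i'. i' \<noteq> i \<longrightarrow> g i' = 0" unfolding g_def delta_def using qp_mult_zero_right by (simp add: qp_zero_def)
  then have "(\<Sum>i'\<in>{i'. g i' \<noteq> 0}. g i') = g i" by (rule sum_nonzero_eq_single)
  moreover have "g i = \<zeta> i 0" unfolding g_def delta_def using qp_mult_one_right[OF QN_Qp[OF z]] by simp
  ultimately show ?thesis unfolding qn_pair_def g_def[symmetric] using Qp_digit0_frac[OF QN_Qp[OF z]] by simp
qed

lemma qn_pair_scaled_delta:
  assumes e: "\<eta> \<in> QN p"
  shows "qn_pair p (scaled_delta p k j) \<eta> = qp_mult p (qp_pinv p k) (\<eta> j) 0"
proof -
  define g where "g i' = qp_mult p (scaled_delta p k j i') (\<eta> i') 0" for i'
  have "\<forall>i'. i' \<noteq> j \<longrightarrow> g i' = 0" unfolding g_def scaled_delta_def using qp_mult_zero_left by (simp add: qp_zero_def)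
  then have "(\<Sum>i'\<in>{i'. g i' \<noteq> 0}. g i') = g j" by (rule sum_nonzero_eq_single)
  moreover have "g j = qp_mult p (qp_pinv p k) (\<eta> j) 0" unfolding g_def scaled_delta_def by simp
  moreover have "frac (qp_mult p (qp_pinv p k) (\<eta> j) 0) = qp_mult p (qp_pinv p k) (\<eta> j) 0"
    by (rule Qp_digit0_frac[OF qp_mult_Qp[OF qp_pinv_Qp QN_Qp[OF e]]])
  ultimately show ?thesis unfolding qn_pair_def g_def[symmetric] by simp
qed

lemma K_adjoint:
  assumes A: "A \<in> {A \<in> Bop p. isK p A}" and adj: "is_adjoint p A B"
  shows "B \<in> {A \<in> Bop p. isK p A}"
proof -
  have A1: "A \<in> Bop p" "entries_mod_finite p A" using A isK_iff_entries_mod_finite by auto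
  have B1: "B \<in> Bop p" using adj unfolding is_adjoint_def by blast
  have key: "entry p B j i k = 0 \<longleftrightarrow> entry p A i j k = 0" for i j k
  proof -
    have "qn_pair p (A (scaled_delta p k j)) (delta p i) = qn_pair p (scaled_delta p k j) (B (delta p i))"
      using adj scaled_delta_QN delta_QN unfolding is_adjoint_def by blast
    then have "A (scaled_delta p k j) i 0 = qp_mult p (qp_pinv p k) (entry p B j i) 0"
      unfolding qn_pair_delta[OF Bop_QN[OF A1(1) scaled_delta_QN]] qn_pair_scaled_delta[OF Bop_QN[OF B1 delta_QN]] entry_def .
    then show ?thesis using entry_digit_eq_0_iff[OF A1(1)] qp_pinv_mult_digit_0[OF entry_Qp[OF B1]] by simp
  qed
  have "entries_mod_finite p B" unfolding entries_mod_finite_def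
  proof
    fix k
    have "{(i, j). entry p B i j k \<noteq> 0} \<subseteq> (\<lambda>(i, j). (j, i)) ` {(i, j). entry p A i j k \<noteq> 0}"
    proof (clarify)
      fix i j assume e: "entry p B i j k \<noteq> 0"
      then have "entry p A j i k \<noteq> 0" using key by blast
      then show "(i, j) \<in> (\<lambda>(i, j). (j, i)) ` {(i, j). entry p A i j k \<noteq> 0}" by force
    qed
    moreover have "finite ((\<lambda>(i, j). (j, i)) ` {(i, j). entry p A i j k \<noteq> 0})"
      using A1(2) unfolding entries_mod_finite_def by blast
    ultimately show "finite {(i, j). entry p B i j k \<noteq> 0}" by (rule finite_subset)
  qed
  then show ?thesis using B1 isK_iff_entries_mod_finite by blast
qed

end

theorem lemma3p2:
  fixes p :: nat
  assumes "prime p"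
  shows "(\<forall>A\<in>Bop p. (isK p A \<longleftrightarrow> entries_to_zero p A) \<and>
                      (entries_to_zero p A \<longleftrightarrow> maps_to_norm_compact p A))
    \<and> (\<lambda>\<xi>. qn_zero) \<in> {A \<in> Bop p. isK p A}
    \<and> (\<forall>A\<in>{A \<in> Bop p. isK p A}. \<forall>B\<in>{A \<in> Bop p. isK p A}.
          (\<lambda>\<xi>. qn_add p (A \<xi>) (B \<xi>)) \<in> {A \<in> Bop p. isK p A})
    \<and> (\<forall>A\<in>{A \<in> Bop p. isK p A}. (\<lambda>\<xi>. qn_neg p (A \<xi>)) \<in> {A \<in> Bop p. isK p A})
    \<and> (\<forall>a\<in>Zp p. \<forall>A\<in>{A \<in> Bop p. isK p A}. (\<lambda>\<xi>. qn_smul p a (A \<xi>)) \<in> {A \<in> Bop p. isK p A})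
    \<and> (\<forall>A\<in>{A \<in> Bop p. isK p A}. \<forall>B\<in>Bop p.
          A \<circ> B \<in> {A \<in> Bop p. isK p A} \<and> B \<circ> A \<in> {A \<in> Bop p. isK p A})
    \<and> (\<forall>A\<in>{A \<in> Bop p. isK p A}. \<forall>B. is_adjoint p A B \<longrightarrow> B \<in> {A \<in> Bop p. isK p A})"
proof -
  interpret padic p
    using prime_ge_2_nat[OF assms] by unfold_locales
  show ?thesis
  proof (intro K_comp conjI ballI allI impI isK_iff_entries_to_zero entries_to_zero_iff_norm_compact
      K_zero K_add K_neg K_smul)
    show "B \<in> {A \<in> Bop p. isK p A}" if "A \<in> {A \<in> Bop p. isK p A}" "is_adjoint p A B" for A B
      using K_adjoint that .
  qed
qed

end
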